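(* In the setting described in the context (general distortion function $g$), suppose that the processes $M=(M_t)_{t=1}^n$ and $L=(L_t)_{t=1}^n$ have the same law. Then for all $t=1,\dots,n$ and $j=1,\dots,m+1$, $$\mathsf E[\mathbf 1_{t,j}]=\frac{\mathsf E\big[G\,\mathbf 1_{\{G\in[\alpha_{j-1},\alpha_j)\}}\big]}{g(\alpha_j)-g(\alpha_{j-1})},$$ and the random vectors $(\mathbf 1_{t,j})_{j=1,\dots,m+1}$, $t=1,\dots,n$, are independent.
   Context: Let $n\ge1$ and let $L=(L_t)_{t=1}^n$ and $M=(M_t)_{t=1}^n$ be real-valued stochastic processes on a probability space $(\Omega,\mathcal F,\mathsf P)$. Assume that for each $t$ the conditional distribution function $F^{t-1}(x):=F_{M_t\mid M_{t-1},\dots,M_1}(x\mid L_{t-1},\dots,L_1)$ (the model's conditional distribution of $M_t$ evaluated at the observations $M_s=L_s$, $s<t$) is continuous in $x$ for all conditioning values. Define $q^{t-1}_{M_t}(u)=\inf\{x:F^{t-1}(x)\ge u\}$ and $q^{+,t-1}_{M_t}(u)=\sup\{x:F^{t-1}(x)\le u\}$. A distortion function is a non-decreasing $g:[0,1]\to[0,1]$ with $g(0)=0$, $g(1)=1$. Let $g$ be a distortion function with (unique) decomposition $g=c_r g_r+c_l g_l+c_c g_c$, where $c_r,c_l,c_c\ge0$ sum to $1$, $c_r g_r(u)=\sum_{r\le u}(g(r)-g(r-))$ collects the left jumps of $g$ (right-continuous step distortion function $g_r$), $c_l g_l(u)=\sum_{l<u}(g(l+)-g(l))$ collects the right jumps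 (left-continuous step distortion function $g_l$), and $g_c$ is a continuous distortion function. Let $G^r,G^l,G^c,C$ be independent, independent of $(L,M)$, with $\mathsf P(G^r\le u)=g_r(u)$, $\mathsf P(G^l<u)=g_l(u)$, $\mathsf P(G^c\le u)=g_c(u)$, and $\mathsf P(C=r)=c_r$, $\mathsf P(C=l)=c_l$, $\mathsf P(C=c)=c_c$; set $G=\mathbf 1_{\{C=r\}}G^r+\mathbf 1_{\{C=l\}}G^l+\mathbf 1_{\{C=c\}}G^c$. Let $0=\alpha_0<\alpha_1<\dots<\alpha_m<\alpha_{m+1}=1$ be a partition such that $g$ is continuous at each $\alpha_j$ and $g(\alpha_j)-g(\alpha_{j-1})\neq0$ for all $j=1,\dots,m+1$. Let $G_{t,j}$ ($t\le n$, $j\le m+1$) have the conditional law of $G$ given $G\in[\alpha_{j-1},\alpha_j)$, and let $C_{t,j}$ be copies of $C$; all $G_{t,j},C_{t,j}$ are mutually independent and independent of $(L,M)$. Define $\mathbf 1_{t,j}=1$ if $$L_t>\mathbf 1_{\{C_{t,j}=r\}}q^{+,t-1}_{M_t}(1-G_{t,j})+\mathbf 1_{\{C_{t,j}\in\{l,c\}\}}q^{t-1}_{M_t}(1-G_{t,j}),$$ and $\mathbf 1_{t,j}=0$ otherwise. *)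

theory Defs
  imports "HOL-Probability.Probability"
begin

text \<open>Labels of the three components of the distortion function (right jumps r, left jumps l, continuous c).\<close>
datatype comp = CompR | CompL | CompC

definition distortion :: "(real \<Rightarrow> real) \<Rightarrow> bool" where
  "distortion g \<longleftrightarrow> mono_on {0..1} g \<and> g 0 = 0 \<and> g 1 = 1 \<and> g ` {0..1} \<subseteq> {0..1}"

definition left_jump :: "(real \<Rightarrow> real) \<Rightarrow> real \<Rightarrow> real" where
  "left_jump g r = g r - Lim (at_left r) g"

definition right_jump :: "(real \<Rightarrow> real) \<Rightarrow> real \<Rightarrow> real" where
  "right_jump g l = Lim (at_right l) g - g l"

definition rc_step_distortion :: "(real \<Rightarrow> real) \<Rightarrow> bool" where
  "rc_step_distortion h \<longleftrightarrow> distortion h \<and> (\<forall>u\<in>{0..<1}. continuous (at_right u) h) \<and>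
     (\<forall>u\<in>{0..1}. h u = (\<Sum>\<^sub>\<infinity>r\<in>{0<..u}. left_jump h r))"

definition lc_step_distortion :: "(real \<Rightarrow> real) \<Rightarrow> bool" where
  "lc_step_distortion h \<longleftrightarrow> distortion h \<and> (\<forall>u\<in>{0<..1}. continuous (at_left u) h) \<and>
     (\<forall>u\<in>{0..1}. h u = (\<Sum>\<^sub>\<infinity>l\<in>{0..<u}. right_jump h l))"

definition distortion_decomp ::
  "(real \<Rightarrow> real) \<Rightarrow> real \<Rightarrow> real \<Rightarrow> real \<Rightarrow> (real \<Rightarrow> real) \<Rightarrow> (real \<Rightarrow> real) \<Rightarrow> (real \<Rightarrow> real) \<Rightarrow> bool"
where
  "distortion_decomp g cr cl cc gr gl gc \<longleftrightarrow>
     distortion g \<and> cr \<ge> 0 \<and> cl \<ge> 0 \<and> cc \<ge> 0 \<and> cr + cl + cc = 1 \<and>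
     rc_step_distortion gr \<and> lc_step_distortion gl \<and> distortion gc \<and> continuous_on {0..1} gc \<and>
     (\<forall>u\<in>{0..1}. g u = cr * gr u + cl * gl u + cc * gc u) \<and>
     (\<forall>u\<in>{0..1}. cr * gr u = (\<Sum>\<^sub>\<infinity>r\<in>{0<..u}. left_jump g r)) \<and>
     (\<forall>u\<in>{0..1}. cl * gl u = (\<Sum>\<^sub>\<infinity>l\<in>{0..<u}. right_jump g l))"

definition hist :: "(nat \<Rightarrow> 'a \<Rightarrow> real) \<Rightarrow> nat \<Rightarrow> 'a \<Rightarrow> (nat \<Rightarrow> real)" where
  "hist X t \<omega> = restrict (\<lambda>s. X s \<omega>) {1..<t}"

definition hist_space :: "nat \<Rightarrow> (nat \<Rightarrow> real) measure" where
  "hist_space t = PiM {1..<t} (\<lambda>_. borel)"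

text \<open>F t h x is a regular conditional distribution function of M_t given (M_1,...,M_{t-1}) = h.\<close>
definition cond_cdf ::
  "'a measure \<Rightarrow> (nat \<Rightarrow> 'a \<Rightarrow> real) \<Rightarrow> nat \<Rightarrow> (nat \<Rightarrow> (nat \<Rightarrow> real) \<Rightarrow> real \<Rightarrow> real) \<Rightarrow> bool"
where
  "cond_cdf P M n F \<longleftrightarrow> (\<forall>t\<in>{1..n}.
     (\<forall>h\<in>space (hist_space t). mono (F t h) \<and> (\<forall>x. continuous (at_right x) (F t h)) \<and>
         (F t h \<longlongrightarrow> 0) at_bot \<and> (F t h \<longlongrightarrow> 1) at_top) \<and>
     (\<forall>x. (\<lambda>h. F t h x) \<in> borel_measurable (hist_space t)) \<and>
     (\<forall>x. \<forall>B\<in>sets (hist_space t).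
         measure P {\<omega>\<in>space P. M t \<omega> \<le> x \<and> hist M t \<omega> \<in> B}
           = (\<integral>\<omega>. indicator B (hist M t \<omega>) * F t (hist M t \<omega>) x \<partial>P)))"

definition lquant :: "(real \<Rightarrow> real) \<Rightarrow> real \<Rightarrow> real" where
  "lquant F u = Inf {x. u \<le> F x}"

definition uquant :: "(real \<Rightarrow> real) \<Rightarrow> real \<Rightarrow> real" where
  "uquant F u = Sup {x. F x \<le> u}"

definition mixG :: "('a \<Rightarrow> real) \<Rightarrow> ('a \<Rightarrow> real) \<Rightarrow> ('a \<Rightarrow> real) \<Rightarrow> ('a \<Rightarrow> comp) \<Rightarrow> 'a \<Rightarrow> real" where
  "mixG Gr Gl Gc C \<omega> = (case C \<omega> of CompR \<Rightarrow> Gr \<omega> | CompL \<Rightarrow> Gl \<omega> | CompC \<Rightarrow> Gc \<omega>)"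

definition viol ::
  "(nat \<Rightarrow> 'a \<Rightarrow> real) \<Rightarrow> (nat \<Rightarrow> (nat \<Rightarrow> real) \<Rightarrow> real \<Rightarrow> real) \<Rightarrow> (nat \<Rightarrow> nat \<Rightarrow> 'a \<Rightarrow> real)
     \<Rightarrow> (nat \<Rightarrow> nat \<Rightarrow> 'a \<Rightarrow> comp) \<Rightarrow> nat \<Rightarrow> nat \<Rightarrow> 'a \<Rightarrow> real"
where
  "viol L F Gt Ct t j \<omega> =
     (if L t \<omega> > (case Ct t j \<omega> of
                    CompR \<Rightarrow> uquant (F t (hist L t \<omega>)) (1 - Gt t j \<omega>)
                  | CompL \<Rightarrow> lquant (F t (hist L t \<omega>)) (1 - Gt t j \<omega>)
                  | CompC \<Rightarrow> lquant (F t (hist L t \<omega>)) (1 - Gt t j \<omega>))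
      then 1 else 0)"

definition pathLM :: "nat \<Rightarrow> (nat \<Rightarrow> 'a \<Rightarrow> real) \<Rightarrow> (nat \<Rightarrow> 'a \<Rightarrow> real) \<Rightarrow> 'a \<Rightarrow> (nat \<Rightarrow> real \<times> real)" where
  "pathLM n L M \<omega> = restrict (\<lambda>t. (L t \<omega>, M t \<omega>)) {1..n}"

definition pathLM_space :: "nat \<Rightarrow> (nat \<Rightarrow> real \<times> real) measure" where
  "pathLM_space n = PiM {1..n} (\<lambda>_. borel \<Otimes>\<^sub>M borel)"

definition path :: "nat \<Rightarrow> (nat \<Rightarrow> 'a \<Rightarrow> real) \<Rightarrow> 'a \<Rightarrow> (nat \<Rightarrow> real)" where
  "path n X \<omega> = restrict (\<lambda>t. X t \<omega>) {1..n}"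

definition path_space :: "nat \<Rightarrow> (nat \<Rightarrow> real) measure" where
  "path_space n = PiM {1..n} (\<lambda>_. borel)"

definition gen_sets :: "'a measure \<Rightarrow> ('a \<Rightarrow> 'b) \<Rightarrow> 'b measure \<Rightarrow> 'a set set" where
  "gen_sets P X N = {X -` A \<inter> space P | A. A \<in> sets N}"

datatype src1 = S1_LM | S1_Gr | S1_Gl | S1_Gc | S1_C
datatype src2 = S2_LM | S2_G nat nat | S2_C nat nat

end

theory Submission
  imports Defs
begin

text \<open>
  Let U_t = F^{t-1}(L_t) be the probability integral transform of L_t given its past. Since L has the
  law of M and F is the (continuous) conditional distribution function of M, U_t is uniform on [0,1]
  conditionally on L_1, ..., L_{t-1}; hence U_1, ..., U_n are independent and uniform. They are
  functions of (L, M), which is independent of the G_{t,j}, so the blocks (U_t, G_{t,1}, ..., G_{t,m+1})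
  are independent. By continuity of F, upper and lower quantile select the same event outside the
  null set {U_t = 1 - G_{t,j}}, so 1_{t,j} = 1{U_t > 1 - G_{t,j}} almost surely. This gives the
  independence of the vectors, and E 1_{t,j} = E G_{t,j} because U_t is uniform and independent of
  G_{t,j}. Finally g(u-) <= P(G < u) <= g(u), so P(G in [alpha_{j-1}, alpha_j)) = g(alpha_j) - g(alpha_{j-1})
  by continuity of g at the alpha_j, and E G_{t,j} is the mean of G on this cell divided by its mass.
\<close>

section \<open>Distribution functions and quantiles\<close>

definition distribution_function :: "(real \<Rightarrow> real) \<Rightarrow> bool" where
  "distribution_function G \<longleftrightarrow>
     mono G \<and> (\<forall>x. continuous (at_right x) G) \<and> (G \<longlongrightarrow> 0) at_bot \<and> (G \<longlongrightarrow> 1) at_top"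

context
  fixes G :: "real \<Rightarrow> real"
  assumes G: "distribution_function G"
begin

lemma distribution_function_mono: "x \<le> y \<Longrightarrow> G x \<le> G y"
  using G by (auto simp: distribution_function_def mono_def)

lemma distribution_function_nonneg: "0 \<le> G x"
proof (rule tendsto_le[OF trivial_limit_at_bot_linorder tendsto_const])
  show "(G \<longlongrightarrow> 0) at_bot" using G by (simp add: distribution_function_def)
  show "eventually (\<lambda>y. G y \<le> G x) at_bot"
    unfolding eventually_at_bot_linorder by (auto intro: distribution_function_mono)
qed

lemma distribution_function_le_1: "G x \<le> 1"
proof (rule tendsto_le[OF trivial_limit_at_top_linorder _ tendsto_const])
  show "(G \<longlongrightarrow> 1) at_top" using G by (simp add: distribution_function_def)
  show "eventually (\<lambda>y. G x \<le> G y) at_top"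
    unfolding eventually_at_top_linorder by (auto intro: distribution_function_mono)
qed

lemma distribution_function_below: "0 < v \<Longrightarrow> \<exists>a. \<forall>y\<le>a. G y < v"
  using G order_tendstoD(2) unfolding distribution_function_def eventually_at_bot_linorder[symmetric] by blast

lemma distribution_function_above: "v < 1 \<Longrightarrow> \<exists>b. \<forall>y\<ge>b. v < G y"
  using G order_tendstoD(1) unfolding distribution_function_def eventually_at_top_linorder[symmetric] by blast

context
  assumes cont: "continuous_on UNIV G"
begin

lemma distribution_function_less_left: "v < G x \<Longrightarrow> \<exists>y<x. v < G y"
proof -
  assume "v < G x"
  moreover have "(G \<longlongrightarrow> G x) (at_left x)"
    using cont by (simp add: continuous_on_eq_continuous_at isCont_def filterlim_at_split)
  ultimately have "eventually (\<lambda>y. v < G y) (at_left x)" using order_tendstoD(1) by blast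
  then obtain b where "b < x" "\<forall>y>b. y < x \<longrightarrow> v < G y" unfolding eventually_at_left_field by auto
  then show ?thesis by (intro exI[of _ "(b + x) / 2"]) auto
qed

lemma uquant_less_iff:
  assumes v: "0 < v" "v < 1"
  shows "uquant G v < x \<longleftrightarrow> v < G x"
proof -
  let ?S = "{x. G x \<le> v}"
  obtain a where a: "\<forall>y\<le>a. G y < v" using distribution_function_below[OF v(1)] by blast
  obtain b where b: "\<forall>y\<ge>b. v < G y" using distribution_function_above[OF v(2)] by blast
  have bdd: "bdd_above ?S" by (rule bdd_aboveI[of _ b]) (use b in \<open>force simp: not_less[symmetric]\<close>)
  show ?thesis
  proof
    assume "uquant G v < x"
    then show "v < G x" using cSup_upper[OF _ bdd, of x] by (force simp: uquant_def)
  next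
    assume "v < G x"
    then obtain y where y: "y < x" "v < G y" using distribution_function_less_left by blast
    have "x' \<le> y" if "G x' \<le> v" for x'
      using distribution_function_mono[of y x'] that y(2) by (cases "x' \<le> y") auto
    moreover have "?S \<noteq> {}" using a by (auto intro!: exI[of _ a] less_imp_le)
    ultimately have "Sup ?S \<le> y" by (intro cSup_least) auto
    with y show "uquant G v < x" by (simp add: uquant_def)
  qed
qed

lemma distribution_function_uquant: "0 < v \<Longrightarrow> v < 1 \<Longrightarrow> G (uquant G v) = v"
proof -
  assume v: "0 < v" "v < 1"
  let ?s = "uquant G v"
  have "(G \<longlongrightarrow> G ?s) (at_right ?s)"
    using cont by (simp add: continuous_on_eq_continuous_at isCont_def filterlim_at_split)
  moreover have "eventually (\<lambda>y. v \<le> G y) (at_right ?s)"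
    using eventually_at_right_less[of ?s] by eventually_elim (use uquant_less_iff[OF v] in auto)
  ultimately have "v \<le> G ?s" by (rule tendsto_lowerbound) simp
  with uquant_less_iff[OF v, of ?s] show ?thesis by simp
qed

lemma lquant_less_iff:
  assumes v: "0 < v" "v < 1" and "G x \<noteq> v"
  shows "lquant G v < x \<longleftrightarrow> v < G x"
proof -
  let ?S = "{x. v \<le> G x}"
  obtain a where a: "\<forall>y\<le>a. G y < v" using distribution_function_below[OF v(1)] by blast
  obtain b where b: "\<forall>y\<ge>b. v < G y" using distribution_function_above[OF v(2)] by blast
  have bdd: "bdd_below ?S" by (rule bdd_belowI[of _ a]) (use a in \<open>force simp: not_less[symmetric]\<close>)
  have ne: "?S \<noteq> {}" using b by (auto intro: less_imp_le)
  show ?thesis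
  proof
    assume "lquant G v < x"
    then obtain y where "v \<le> G y" "y < x" unfolding lquant_def cInf_less_iff[OF ne bdd] by auto
    then show "v < G x" using assms(3) distribution_function_mono[of y x] by simp
  next
    assume "v < G x"
    then obtain y where y: "y < x" "v < G y" using distribution_function_less_left by blast
    have "Inf ?S \<le> y" using y by (intro cInf_lower[OF _ bdd]) auto
    with y show "lquant G v < x" by (simp add: lquant_def)
  qed
qed

end

end

lemma measurable_right_continuous_comp:
  fixes G :: "'a \<Rightarrow> real \<Rightarrow> real"
  assumes mono: "\<And>\<omega>. \<omega> \<in> space N \<Longrightarrow> mono (G \<omega>)"
    and rcont: "\<And>\<omega> x. \<omega> \<in> space N \<Longrightarrow> continuous (at_right x) (G \<omega>)"
    and [measurable]: "\<And>x. (\<lambda>\<omega>. G \<omega> x) \<in> borel_measurable N" "X \<in> borel_measurable N"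
  shows "(\<lambda>\<omega>. G \<omega> (X \<omega>)) \<in> borel_measurable N"
proof (rule borel_measurableI_less)
  fix y
  have "{\<omega>\<in>space N. G \<omega> (X \<omega>) < y} = {\<omega>\<in>space N. \<exists>r::rat. G \<omega> (of_rat r) < y \<and> X \<omega> < of_rat r}"
  proof (intro Collect_cong conj_cong refl iffI)
    fix \<omega> assume \<omega>: "\<omega> \<in> space N" and "G \<omega> (X \<omega>) < y"
    moreover have "(G \<omega> \<longlongrightarrow> G \<omega> (X \<omega>)) (at_right (X \<omega>))"
      using rcont[OF \<omega>] by (simp add: continuous_within)
    ultimately have "eventually (\<lambda>z. G \<omega> z < y) (at_right (X \<omega>))" using order_tendstoD(2) by blast
    then obtain b where b: "b > X \<omega>" "\<forall>z>X \<omega>. z < b \<longrightarrow> G \<omega> z < y"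
      unfolding eventually_at_right_field by auto
    obtain r where "X \<omega> < of_rat r" "of_rat r < b" using of_rat_dense[OF b(1)] by blast
    then show "\<exists>r::rat. G \<omega> (of_rat r) < y \<and> X \<omega> < of_rat r" using b by auto
  next
    fix \<omega> assume "\<omega> \<in> space N" and "\<exists>r::rat. G \<omega> (of_rat r) < y \<and> X \<omega> < of_rat r"
    then obtain r :: rat where "\<omega> \<in> space N" "G \<omega> (of_rat r) < y" "X \<omega> < of_rat r" by blast
    then show "G \<omega> (X \<omega>) < y" using mono[THEN monoD, of \<omega> "X \<omega>" "of_rat r"] by simp
  qed
  also have "\<dots> \<in> sets N" by measurable
  finally show "{\<omega>\<in>space N. G \<omega> (X \<omega>) < y} \<in> sets N" .
qed

lemma downset_eq_UNIV_iff:
  fixes S :: "real set"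
  assumes down: "\<And>x y. y \<in> S \<Longrightarrow> x \<le> y \<Longrightarrow> x \<in> S"
  shows "S = UNIV \<longleftrightarrow> (\<forall>r::rat. of_rat r \<in> S)"
proof (intro iffI)
  assume S: "\<forall>r::rat. of_rat r \<in> S"
  have "x \<in> S" for x
  proof -
    obtain r where "x < of_rat r" using of_rat_dense[of x "x + 1"] by auto
    then show "x \<in> S" using S down by (blast intro: less_imp_le)
  qed
  then show "S = UNIV" by blast
qed auto

lemma downset_eq_empty_iff:
  fixes S :: "real set"
  assumes down: "\<And>x y. y \<in> S \<Longrightarrow> x \<le> y \<Longrightarrow> x \<in> S"
  shows "S = {} \<longleftrightarrow> (\<forall>r::rat. of_rat r \<notin> S)"
proof (intro iffI)
  assume S: "\<forall>r::rat. of_rat r \<notin> S"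
  have "x \<notin> S" for x
  proof -
    obtain r where "of_rat r < x" using of_rat_dense[of "x - 1" x] by auto
    then show "x \<notin> S" using S down by (blast intro: less_imp_le)
  qed
  then show "S = {}" by blast
qed auto

lemma Sup_downset_less_iff:
  fixes S :: "real set"
  assumes down: "\<And>x y. y \<in> S \<Longrightarrow> x \<le> y \<Longrightarrow> x \<in> S" and "S \<noteq> {}" "S \<noteq> UNIV"
  shows "Sup S < x \<longleftrightarrow> (\<exists>r::rat. of_rat r < x \<and> of_rat r \<notin> S)"
proof -
  obtain b where b: "b \<notin> S" using assms(3) by auto
  have below_outside: "y < c" if "y \<in> S" "c \<notin> S" for y c using down that by (meson not_less)
  have bdd: "bdd_above S" using below_outside[OF _ b] by (auto intro!: bdd_aboveI less_imp_le)
  show ?thesis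
  proof
    assume "Sup S < x"
    then obtain r where r: "Sup S < of_rat r" "of_rat r < x" using of_rat_dense by blast
    then have "of_rat r \<notin> S" using cSup_upper[OF _ bdd] by force
    with r show "\<exists>r::rat. of_rat r < x \<and> of_rat r \<notin> S" by blast
  next
    assume "\<exists>r::rat. of_rat r < x \<and> of_rat r \<notin> S"
    then obtain r :: rat where "of_rat r < x" "of_rat r \<notin> S" by blast
    moreover have "Sup S \<le> of_rat r"
      using assms(2) below_outside[OF _ \<open>of_rat r \<notin> S\<close>] by (intro cSup_least) (auto intro: less_imp_le)
    ultimately show "Sup S < x" by simp
  qed
qed

lemma Inf_upset_less_iff:
  fixes S :: "real set"
  assumes up: "\<And>x y. y \<in> S \<Longrightarrow> y \<le> x \<Longrightarrow> x \<in> S" and "S \<noteq> {}" "S \<noteq> UNIV"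
  shows "Inf S < x \<longleftrightarrow> (\<exists>r::rat. of_rat r < x \<and> of_rat r \<in> S)"
proof -
  obtain b where b: "b \<notin> S" using assms(3) by auto
  have "b \<le> y" if "y \<in> S" for y using up[OF that] b by (cases "b \<le> y") auto
  then have bdd: "bdd_below S" by (rule bdd_belowI)
  show ?thesis
  proof
    assume "Inf S < x"
    then obtain y where "y \<in> S" "y < x" using cInf_less_iff[OF assms(2) bdd] by blast
    moreover obtain r where "y < of_rat r" "of_rat r < x" using of_rat_dense[OF \<open>y < x\<close>] by blast
    ultimately show "\<exists>r::rat. of_rat r < x \<and> of_rat r \<in> S" using up by (blast intro: less_imp_le)
  next
    assume "\<exists>r::rat. of_rat r < x \<and> of_rat r \<in> S"
    then show "Inf S < x" using cInf_lower[OF _ bdd] by (force intro: le_less_trans)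
  qed
qed

context
  fixes N :: "'a measure" and G :: "'a \<Rightarrow> real \<Rightarrow> real" and v X :: "'a \<Rightarrow> real"
  assumes mono: "\<And>\<omega>. \<omega> \<in> space N \<Longrightarrow> mono (G \<omega>)"
    and [measurable]: "\<And>x. (\<lambda>\<omega>. G \<omega> x) \<in> borel_measurable N" "v \<in> borel_measurable N" "X \<in> borel_measurable N"
begin

lemma sets_uquant_less: "{\<omega>\<in>space N. uquant (G \<omega>) (v \<omega>) < X \<omega>} \<in> sets N"
proof -
  let ?S = "\<lambda>\<omega>. {x. G \<omega> x \<le> v \<omega>}"
  define Q where "Q \<omega> \<longleftrightarrow>
    ((\<forall>r::rat. G \<omega> (of_rat r) \<le> v \<omega>) \<and> Sup UNIV < X \<omega>) \<or>
    ((\<forall>r::rat. v \<omega> < G \<omega> (of_rat r)) \<and> Sup {} < X \<omega>) \<or>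
    (\<not> (\<forall>r::rat. G \<omega> (of_rat r) \<le> v \<omega>) \<and> \<not> (\<forall>r::rat. v \<omega> < G \<omega> (of_rat r)) \<and>
      (\<exists>r::rat. of_rat r < X \<omega> \<and> v \<omega> < G \<omega> (of_rat r)))" for \<omega>
  have "uquant (G \<omega>) (v \<omega>) < X \<omega> \<longleftrightarrow> Q \<omega>" if \<omega>: "\<omega> \<in> space N" for \<omega>
  proof -
    have down: "y \<in> ?S \<omega> \<Longrightarrow> x \<le> y \<Longrightarrow> x \<in> ?S \<omega>" for x y
      using mono[OF \<omega>] by (auto simp: mono_def intro: order_trans)
    have "?S \<omega> = UNIV \<longleftrightarrow> (\<forall>r::rat. G \<omega> (of_rat r) \<le> v \<omega>)"
      using downset_eq_UNIV_iff[of "?S \<omega>", OF down] by simp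
    moreover have "?S \<omega> = {} \<longleftrightarrow> (\<forall>r::rat. v \<omega> < G \<omega> (of_rat r))"
      using downset_eq_empty_iff[of "?S \<omega>", OF down] by (simp add: not_le)
    moreover have "?S \<omega> \<noteq> {} \<Longrightarrow> ?S \<omega> \<noteq> UNIV \<Longrightarrow>
        Sup (?S \<omega>) < X \<omega> \<longleftrightarrow> (\<exists>r::rat. of_rat r < X \<omega> \<and> v \<omega> < G \<omega> (of_rat r))"
      using Sup_downset_less_iff[of "?S \<omega>", OF down] by (simp add: not_le)
    ultimately show ?thesis by (cases "?S \<omega> = UNIV"; cases "?S \<omega> = {}") (auto simp: uquant_def Q_def)
  qed
  then have "{\<omega>\<in>space N. uquant (G \<omega>) (v \<omega>) < X \<omega>} = {\<omega>\<in>space N. Q \<omega>}" by auto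
  also have "\<dots> \<in> sets N" unfolding Q_def by measurable
  finally show ?thesis .
qed

lemma sets_lquant_less: "{\<omega>\<in>space N. lquant (G \<omega>) (v \<omega>) < X \<omega>} \<in> sets N"
proof -
  let ?S = "\<lambda>\<omega>. {x. v \<omega> \<le> G \<omega> x}"
  define Q where "Q \<omega> \<longleftrightarrow>
    ((\<forall>r::rat. v \<omega> \<le> G \<omega> (of_rat r)) \<and> Inf UNIV < X \<omega>) \<or>
    ((\<forall>r::rat. G \<omega> (of_rat r) < v \<omega>) \<and> Inf {} < X \<omega>) \<or>
    (\<not> (\<forall>r::rat. v \<omega> \<le> G \<omega> (of_rat r)) \<and> \<not> (\<forall>r::rat. G \<omega> (of_rat r) < v \<omega>) \<and>
      (\<exists>r::rat. of_rat r < X \<omega> \<and> v \<omega> \<le> G \<omega> (of_rat r)))" for \<omega>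
  have "lquant (G \<omega>) (v \<omega>) < X \<omega> \<longleftrightarrow> Q \<omega>" if \<omega>: "\<omega> \<in> space N" for \<omega>
  proof -
    have up: "y \<in> ?S \<omega> \<Longrightarrow> y \<le> x \<Longrightarrow> x \<in> ?S \<omega>" for x y
      using mono[OF \<omega>] by (auto simp: mono_def intro: order_trans)
    have down: "y \<in> - ?S \<omega> \<Longrightarrow> x \<le> y \<Longrightarrow> x \<in> - ?S \<omega>" for x y
      using up by blast
    have "?S \<omega> = UNIV \<longleftrightarrow> - ?S \<omega> = {}" by auto
    also have "\<dots> \<longleftrightarrow> (\<forall>r::rat. v \<omega> \<le> G \<omega> (of_rat r))"
      using downset_eq_empty_iff[of "- ?S \<omega>", OF down] by simp
    finally have "?S \<omega> = UNIV \<longleftrightarrow> (\<forall>r::rat. v \<omega> \<le> G \<omega> (of_rat r))" .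
    moreover have "?S \<omega> = {} \<longleftrightarrow> - ?S \<omega> = UNIV" by auto
    moreover have "\<dots> \<longleftrightarrow> (\<forall>r::rat. G \<omega> (of_rat r) < v \<omega>)"
      using downset_eq_UNIV_iff[of "- ?S \<omega>", OF down] by (simp add: not_le)
    moreover have "?S \<omega> \<noteq> {} \<Longrightarrow> ?S \<omega> \<noteq> UNIV \<Longrightarrow>
        Inf (?S \<omega>) < X \<omega> \<longleftrightarrow> (\<exists>r::rat. of_rat r < X \<omega> \<and> v \<omega> \<le> G \<omega> (of_rat r))"
      using Inf_upset_less_iff[of "?S \<omega>", OF up] by simp
    ultimately show ?thesis by (cases "?S \<omega> = UNIV"; cases "?S \<omega> = {}") (auto simp: lquant_def Q_def)
  qed
  then have "{\<omega>\<in>space N. lquant (G \<omega>) (v \<omega>) < X \<omega>} = {\<omega>\<in>space N. Q \<omega>}" by auto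
  also have "\<dots> \<in> sets N" unfolding Q_def by measurable
  finally show ?thesis .
qed

end

text \<open>Rounding up to the grid of mesh 2^-k, after truncation to [-k, k] so that only finitely many
  values occur.\<close>

definition dyadic_approx :: "nat \<Rightarrow> real \<Rightarrow> real" where
  "dyadic_approx k x = \<lceil>2 ^ k * max (- real k) (min (real k) x)\<rceil> / 2 ^ k"

lemma dyadic_approx_range:
  "dyadic_approx k x \<in> (\<lambda>z. of_int z / 2 ^ k) ` {- (int k * 2 ^ k) .. int k * 2 ^ k}"
proof -
  let ?c = "max (- real k) (min (real k) x)"
  have "- real k \<le> ?c" "?c \<le> real k" by (simp_all add: max_def min_def)
  then have "2 ^ k * (- real k) \<le> 2 ^ k * ?c" "2 ^ k * ?c \<le> 2 ^ k * real k"
    by (intro mult_left_mono; simp)+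
  then have "- (int k * 2 ^ k) \<le> \<lceil>2 ^ k * ?c\<rceil>" "\<lceil>2 ^ k * ?c\<rceil> \<le> int k * 2 ^ k"
    unfolding le_ceiling_iff ceiling_le_iff by (simp_all add: algebra_simps)
  then show ?thesis unfolding dyadic_approx_def by (intro imageI image_eqI[OF refl]) simp
qed

lemma dyadic_approx_eventually:
  "eventually (\<lambda>k. dyadic_approx k x = \<lceil>2 ^ k * x\<rceil> / 2 ^ k) sequentially"
proof -
  obtain N where N: "\<bar>x\<bar> \<le> real N" using real_arch_simple by blast
  have "max (- real k) (min (real k) x) = x" if "N \<le> k" for k
    using N that by (simp add: max_def min_def abs_le_iff)
  then show ?thesis unfolding eventually_sequentially dyadic_approx_def by (intro exI[of _ N]) simp
qed

lemma eventually_le_dyadic_approx: "eventually (\<lambda>k. x \<le> dyadic_approx k x) sequentially"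
  using dyadic_approx_eventually[of x]
proof eventually_elim
  case (elim k)
  have "2 ^ k * x \<le> of_int \<lceil>2 ^ k * x\<rceil>" by (rule le_of_int_ceiling)
  then show ?case unfolding elim by (simp add: pos_le_divide_eq mult.commute)
qed

lemma dyadic_approx_tendsto: "(\<lambda>k. dyadic_approx k x) \<longlonglongrightarrow> x"
proof (rule tendsto_sandwich[of "\<lambda>_. x" _ _ "\<lambda>k. x + (1 / 2) ^ k"])
  show "eventually (\<lambda>k. x \<le> dyadic_approx k x) sequentially" by (rule eventually_le_dyadic_approx)
  show "eventually (\<lambda>k. dyadic_approx k x \<le> x + (1 / 2) ^ k) sequentially"
    using dyadic_approx_eventually[of x]
  proof eventually_elim
    case (elim k)
    have "of_int \<lceil>2 ^ k * x\<rceil> \<le> 2 ^ k * x + 1" by linarith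
    then have "of_int \<lceil>2 ^ k * x\<rceil> / 2 ^ k \<le> x + 1 / 2 ^ k" by (simp add: divide_le_eq algebra_simps)
    then show ?case unfolding elim by (simp add: power_one_over)
  qed
  have "(\<lambda>k. x + (1 / 2 :: real) ^ k) \<longlonglongrightarrow> x + 0" by (intro tendsto_intros) simp
  then show "(\<lambda>k. x + (1 / 2 :: real) ^ k) \<longlonglongrightarrow> x" by simp
qed simp

lemma tendsto_dyadic_approx_right_continuous:
  assumes "continuous (at_right x) f"
  shows "(\<lambda>k. f (dyadic_approx k x)) \<longlonglongrightarrow> f x"
proof (rule continuous_within_tendsto_compose[where S = "{x..}"])
  show "continuous (at x within {x..}) f" using assms by (simp add: at_within_Ici_at_right)
qed (use eventually_le_dyadic_approx dyadic_approx_tendsto in auto)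

definition uniform_cdf :: "real \<Rightarrow> real" where
  "uniform_cdf x = max 0 (min 1 x)"

lemma uniform_cdf_borel[measurable]: "uniform_cdf \<in> borel_measurable borel"
  unfolding uniform_cdf_def[abs_def] by measurable

lemma Int_stable_gen_sets: "Int_stable (gen_sets M X N)"
proof (rule Int_stableI)
  fix a b assume "a \<in> gen_sets M X N" "b \<in> gen_sets M X N"
  then obtain A B where "a = X -` A \<inter> space M" "b = X -` B \<inter> space M" "A \<in> sets N" "B \<in> sets N"
    by (auto simp: gen_sets_def)
  then show "a \<inter> b \<in> gen_sets M X N" unfolding gen_sets_def by (intro CollectI exI[of _ "A \<inter> B"]) auto
qed

context prob_space
begin

lemma tendsto_prob_eventually_mem:
  assumes [measurable]: "\<And>k. A k \<in> events" "A' \<in> events"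
    and mem: "\<And>\<omega>. \<omega> \<in> space M \<Longrightarrow> eventually (\<lambda>k. \<omega> \<in> A k \<longleftrightarrow> \<omega> \<in> A') sequentially"
  shows "(\<lambda>k. prob (A k)) \<longlonglongrightarrow> prob A'"
proof -
  have "(\<lambda>k. \<integral>\<omega>. indicator (A k) \<omega> \<partial>M) \<longlonglongrightarrow> (\<integral>\<omega>. indicator A' \<omega> \<partial>M :: real)"
  proof (rule integral_dominated_convergence[where w = "\<lambda>_. 1"])
    show "AE \<omega> in M. (\<lambda>k. indicator (A k) \<omega>) \<longlonglongrightarrow> (indicator A' \<omega> :: real)"
    proof (rule AE_I2)
      fix \<omega> assume "\<omega> \<in> space M"
      have "eventually (\<lambda>k. indicator (A k) \<omega> = (indicator A' \<omega> :: real)) sequentially"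
        using mem[OF \<open>\<omega> \<in> space M\<close>] by (rule eventually_mono) (simp add: indicator_def)
      then show "(\<lambda>k. indicator (A k) \<omega>) \<longlonglongrightarrow> (indicator A' \<omega> :: real)"
        by (rule tendsto_eventually)
    qed
  qed (auto simp: indicator_def)
  then show ?thesis by simp
qed

lemma AE_of_prob_eq_0:
  assumes "{\<omega>\<in>space M. \<not> Q \<omega>} \<in> events" "prob {\<omega>\<in>space M. \<not> Q \<omega>} = 0"
  shows "AE \<omega> in M. Q \<omega>"
  using assms by (subst AE_iff_measurable[OF assms(1) refl]) (simp add: emeasure_eq_measure)

lemma indep_sets_AE_eq:
  assumes indep: "indep_sets F I" and G: "\<And>i. i \<in> I \<Longrightarrow> G i \<subseteq> events"
    and AE_eq: "\<And>i A. i \<in> I \<Longrightarrow> A \<in> G i \<Longrightarrow> \<exists>B\<in>F i. AE \<omega> in M. \<omega> \<in> A \<longleftrightarrow> \<omega> \<in> B"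
  shows "indep_sets G I"
proof (rule indep_setsI)
  fix A J assume J: "J \<noteq> {}" "J \<subseteq> I" "finite J" and A: "\<forall>j\<in>J. A j \<in> G j"
  then have "\<forall>j\<in>J. \<exists>B. B \<in> F j \<and> (AE \<omega> in M. \<omega> \<in> A j \<longleftrightarrow> \<omega> \<in> B)" using AE_eq by blast
  then obtain B where B: "\<And>j. j \<in> J \<Longrightarrow> B j \<in> F j" "\<And>j. j \<in> J \<Longrightarrow> AE \<omega> in M. \<omega> \<in> A j \<longleftrightarrow> \<omega> \<in> B j"
    by (metis bchoice)
  have F_ev: "F i \<subseteq> events" if "i \<in> I" for i using indep that by (simp add: indep_sets_def)
  have A_ev: "A j \<in> events" if "j \<in> J" for j
    using subsetD[OF G, of j "A j"] A J(2) that by auto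
  have B_ev: "B j \<in> events" if "j \<in> J" for j
    using subsetD[OF F_ev, of j "B j"] B(1) J(2) that by auto
  have prob_eq: "prob (A j) = prob (B j)" if "j \<in> J" for j
    using B(2)[OF that] A_ev[OF that] B_ev[OF that] by (intro finite_measure_eq_AE) auto
  have "AE \<omega> in M. \<forall>j\<in>J. \<omega> \<in> A j \<longleftrightarrow> \<omega> \<in> B j" using B(2) J(3) by (simp add: AE_finite_all)
  then have "prob (\<Inter>j\<in>J. A j) = prob (\<Inter>j\<in>J. B j)"
    using J A_ev B_ev by (intro finite_measure_eq_AE) (auto elim!: eventually_mono)
  also have "\<dots> = (\<Prod>j\<in>J. prob (B j))" using B(1) J by (intro indep_setsD[OF indep]) auto
  also have "\<dots> = (\<Prod>j\<in>J. prob (A j))" using prob_eq by simp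
  finally show "prob (\<Inter>j\<in>J. A j) = (\<Prod>j\<in>J. prob (A j))" .
qed (use G in auto)

lemma indep_vars_AE_eq:
  assumes indep: "indep_vars N X I"
    and Y: "\<And>i. i \<in> I \<Longrightarrow> random_variable (N i) (Y i)" and AE_eq: "\<And>i. i \<in> I \<Longrightarrow> AE \<omega> in M. X i \<omega> = Y i \<omega>"
  shows "indep_vars N Y I"
proof -
  have X: "indep_sets (\<lambda>i. {X i -` A \<inter> space M | A. A \<in> sets (N i)}) I"
    using indep by (simp add: indep_vars_def2)
  have "indep_sets (\<lambda>i. {Y i -` A \<inter> space M | A. A \<in> sets (N i)}) I"
  proof (rule indep_sets_AE_eq[OF X])
    fix i assume i: "i \<in> I"
    show "{Y i -` A \<inter> space M | A. A \<in> sets (N i)} \<subseteq> events"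
      using measurable_sets[OF Y[OF i]] by blast
    fix A assume "A \<in> {Y i -` A \<inter> space M | A. A \<in> sets (N i)}"
    then obtain A' where A': "A = Y i -` A' \<inter> space M" "A' \<in> sets (N i)" by blast
    have "AE \<omega> in M. \<omega> \<in> A \<longleftrightarrow> \<omega> \<in> X i -` A' \<inter> space M"
      using AE_eq[OF i] unfolding A'(1) by eventually_elim simp
    then show "\<exists>B\<in>{X i -` A \<inter> space M | A. A \<in> sets (N i)}. AE \<omega> in M. \<omega> \<in> A \<longleftrightarrow> \<omega> \<in> B"
      using A'(2) by blast
  qed
  then show ?thesis using Y by (simp add: indep_vars_def2)
qed

lemma prob_indep_gen_sets_pair:
  assumes indep: "indep_sets F I" and ij: "i \<in> I" "j \<in> I" "i \<noteq> j"
    and Fi: "F i = gen_sets M X (count_space UNIV)" and Fj: "F j = gen_sets M Y borel" and A: "A \<in> sets borel"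
  shows "prob {\<omega>\<in>space M. X \<omega> = k \<and> Y \<omega> \<in> A} = prob {\<omega>\<in>space M. X \<omega> = k} * prob {\<omega>\<in>space M. Y \<omega> \<in> A}"
proof -
  define a where "a = X -` {k} \<inter> space M"
  define b where "b = Y -` A \<inter> space M"
  have "a \<in> F i" unfolding Fi gen_sets_def a_def by (intro CollectI exI[of _ "{k}"]) simp
  moreover have "b \<in> F j" unfolding Fj gen_sets_def b_def using A by blast
  ultimately have "prob (\<Inter>l\<in>{i, j}. if l = i then a else b) = (\<Prod>l\<in>{i, j}. prob (if l = i then a else b))"
    using ij by (intro indep_setsD[OF indep]) auto
  then have "prob (a \<inter> b) = prob a * prob b" using ij(3) by (simp add: Int_commute)
  moreover have "a \<inter> b = {\<omega>\<in>space M. X \<omega> = k \<and> Y \<omega> \<in> A}" "a = {\<omega>\<in>space M. X \<omega> = k}"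
    "b = {\<omega>\<in>space M. Y \<omega> \<in> A}" by (auto simp: a_def b_def)
  ultimately show ?thesis by simp
qed

lemma indep_var_of_indep_vars:
  assumes indep: "indep_vars N X I" and ij: "i \<in> I" "j \<in> I" "i \<noteq> j"
  shows "indep_var (N i) (X i) (N j) (X j)"
proof -
  have "indep_var (PiM {i} N) (\<lambda>\<omega>. restrict (\<lambda>k. X k \<omega>) {i}) (PiM {j} N) (\<lambda>\<omega>. restrict (\<lambda>k. X k \<omega>) {j})"
    using ij by (intro indep_var_restrict[OF indep]) auto
  then have "indep_var (N i) ((\<lambda>x. x i) \<circ> (\<lambda>\<omega>. restrict (\<lambda>k. X k \<omega>) {i}))
      (N j) ((\<lambda>x. x j) \<circ> (\<lambda>\<omega>. restrict (\<lambda>k. X k \<omega>) {j}))"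
    by (rule indep_var_compose) (auto intro: measurable_component_singleton)
  then show ?thesis by (simp add: comp_def)
qed

lemma indep_sets_refine:
  assumes F: "indep_sets F I" and i0: "i0 \<in> I" and H: "indep_sets H J"
    and H_F: "\<And>K A. finite K \<Longrightarrow> K \<noteq> {} \<Longrightarrow> K \<subseteq> J \<Longrightarrow> (\<And>j. j \<in> K \<Longrightarrow> A j \<in> H j) \<Longrightarrow> (\<Inter>j\<in>K. A j) \<in> F i0"
  shows "indep_sets (case_sum H F) (J <+> (I - {i0}))"
proof (rule indep_setsI)
  have "F i \<subseteq> events" if "i \<in> I" for i using F that by (simp add: indep_sets_def)
  moreover have "H j \<subseteq> events" if "j \<in> J" for j using H that by (simp add: indep_sets_def)
  ultimately show "case_sum H F k \<subseteq> events" if "k \<in> J <+> (I - {i0})" for k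
    using that by (auto simp: subset_iff)
next
  fix A K assume K: "K \<noteq> {}" "K \<subseteq> J <+> (I - {i0})" "finite K" and A: "\<forall>k\<in>K. A k \<in> case_sum H F k"
  define K1 where "K1 = Inl -` K"
  define K2 where "K2 = Inr -` K"
  have K12: "K = K1 <+> K2" using K(2) unfolding K1_def K2_def Plus_def by blast
  have fin: "finite K1" "finite K2"
    unfolding K1_def K2_def by (intro finite_vimageI[OF K(3)] inj_Inl inj_Inr)+
  have sub: "K1 \<subseteq> J" "K2 \<subseteq> I" "i0 \<notin> K2" using K(2) unfolding K1_def K2_def Plus_def by blast+
  have A1: "A (Inl j) \<in> H j" if "j \<in> K1" for j using A that unfolding K1_def by force
  have A2: "A (Inr i) \<in> F i" if "i \<in> K2" for i using A that unfolding K2_def by force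
  have prod_K: "(\<Prod>k\<in>K. prob (A k)) = (\<Prod>j\<in>K1. prob (A (Inl j))) * (\<Prod>i\<in>K2. prob (A (Inr i)))"
    unfolding K12 using fin by (simp add: prod.Plus comp_def)
  have inter_K: "(\<Inter>k\<in>K. A k) = (\<Inter>j\<in>K1. A (Inl j)) \<inter> (\<Inter>i\<in>K2. A (Inr i))"
    unfolding K12 Plus_def by blast
  show "prob (\<Inter>k\<in>K. A k) = (\<Prod>k\<in>K. prob (A k))"
  proof (cases "K1 = {}")
    case True
    then have "K2 \<noteq> {}" using K(1) K12 by auto
    then have "prob (\<Inter>i\<in>K2. A (Inr i)) = (\<Prod>i\<in>K2. prob (A (Inr i)))"
      using fin sub A2 by (intro indep_setsD[OF F]) auto
    then show ?thesis using True prod_K inter_K by simp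
  next
    case False
    define X where "X = (\<Inter>j\<in>K1. A (Inl j))"
    define B where "B i = (if i = i0 then X else A (Inr i))" for i
    have "X \<in> F i0" unfolding X_def using False fin sub A1 by (intro H_F) auto
    then have "prob (\<Inter>i\<in>insert i0 K2. B i) = (\<Prod>i\<in>insert i0 K2. prob (B i))"
      using A2 fin sub i0 by (intro indep_setsD[OF F]) (auto simp: B_def)
    moreover have "(\<Inter>i\<in>insert i0 K2. B i) = (\<Inter>k\<in>K. A k)"
      unfolding inter_K B_def X_def using sub(3) by auto
    moreover have "(\<Prod>i\<in>insert i0 K2. prob (B i)) = prob (B i0) * (\<Prod>i\<in>K2. prob (B i))"
      using fin(2) sub(3) by (rule prod.insert)
    moreover have "(\<Prod>i\<in>K2. prob (B i)) = (\<Prod>i\<in>K2. prob (A (Inr i)))"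
      using sub(3) by (intro prod.cong) (auto simp: B_def)
    moreover have "prob X = (\<Prod>j\<in>K1. prob (A (Inl j)))"
      unfolding X_def using False fin sub A1 by (intro indep_setsD[OF H]) auto
    ultimately show ?thesis using prod_K by (simp add: B_def)
  qed
qed

lemma prob_indep_pair_eq_integral:
  fixes X Y :: "'a \<Rightarrow> real"
  assumes indep: "indep_var borel X borel Y" and S[measurable]: "S \<in> sets (borel \<Otimes>\<^sub>M borel)"
    and f: "\<And>x. prob {\<omega>\<in>space M. (x, Y \<omega>) \<in> S} = f x" and [measurable]: "f \<in> borel_measurable borel"
  shows "prob {\<omega>\<in>space M. (X \<omega>, Y \<omega>) \<in> S} = (\<integral>\<omega>. f (X \<omega>) \<partial>M)"
proof -
  have [measurable]: "X \<in> borel_measurable M" "Y \<in> borel_measurable M"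
    using indep_var_rv1[OF indep] indep_var_rv2[OF indep] by auto
  let ?DX = "distr M borel X" and ?DY = "distr M borel Y"
  interpret DY: prob_space ?DY by (rule prob_space_distr) simp
  have f_bounds: "0 \<le> f x" "f x \<le> 1" for x unfolding f[symmetric] by (rule measure_nonneg, rule prob_le_1)
  have "emeasure (?DX \<Otimes>\<^sub>M ?DY) S = (\<integral>\<^sup>+ x. emeasure ?DY (Pair x -` S) \<partial>?DX)"
    by (rule DY.emeasure_pair_measure_alt) simp
  also have "\<dots> = (\<integral>\<^sup>+ x. ennreal (f x) \<partial>?DX)"
  proof (rule nn_integral_cong)
    fix x
    have "emeasure ?DY (Pair x -` S) = emeasure M (Y -` (Pair x -` S) \<inter> space M)"
      by (rule emeasure_distr) (auto intro: measurable_Pair2')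
    also have "\<dots> = ennreal (f x)" by (simp add: emeasure_eq_measure vimage_def Int_def conj_commute f[symmetric])
    finally show "emeasure ?DY (Pair x -` S) = ennreal (f x)" .
  qed
  also have "\<dots> = (\<integral>\<^sup>+ \<omega>. ennreal (f (X \<omega>)) \<partial>M)" by (rule nn_integral_distr) auto
  also have "\<dots> = ennreal (\<integral>\<omega>. f (X \<omega>) \<partial>M)"
    using f_bounds by (intro nn_integral_eq_integral integrable_const_bound[where B = 1]) (auto simp: abs_le_iff)
  finally have "measure (?DX \<Otimes>\<^sub>M ?DY) S = (\<integral>\<omega>. f (X \<omega>) \<partial>M)"
    using f_bounds by (simp add: measure_def integral_nonneg_AE)
  moreover have "prob {\<omega>\<in>space M. (X \<omega>, Y \<omega>) \<in> S} = measure (distr M (borel \<Otimes>\<^sub>M borel) (\<lambda>\<omega>. (X \<omega>, Y \<omega>))) S"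
    by (subst measure_distr) (auto intro!: arg_cong[where f = prob])
  ultimately show ?thesis using indep by (simp add: indep_var_distribution_eq)
qed

lemma integral_conditional_law:
  fixes X Y :: "'a \<Rightarrow> real"
  assumes [measurable]: "X \<in> borel_measurable M" "Y \<in> borel_measurable M" "I \<in> sets borel"
    and pos: "0 < prob {\<omega>\<in>space M. Y \<omega> \<in> I}"
    and law: "\<And>A. A \<in> sets borel \<Longrightarrow>
      prob (X -` A \<inter> space M) = prob {\<omega>\<in>space M. Y \<omega> \<in> A \<inter> I} / prob {\<omega>\<in>space M. Y \<omega> \<in> I}"
  shows "(\<integral>\<omega>. X \<omega> \<partial>M) = (\<integral>\<omega>. Y \<omega> * indicator I (Y \<omega>) \<partial>M) / prob {\<omega>\<in>space M. Y \<omega> \<in> I}"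
proof -
  let ?c = "prob {\<omega>\<in>space M. Y \<omega> \<in> I}"
  define d where "d x = indicator I x / ?c" for x :: real
  have [measurable]: "d \<in> borel_measurable borel" unfolding d_def by measurable
  have "distr M borel X = density (distr M borel Y) d"
  proof (rule measure_eqI)
    fix A assume "A \<in> sets (distr M borel X)"
    then have [measurable]: "A \<in> sets borel" by simp
    have "emeasure (density (distr M borel Y) d) A = (\<integral>\<^sup>+ x. ennreal (1 / ?c) * indicator (A \<inter> I) x \<partial>distr M borel Y)"
      by (subst emeasure_density) (auto intro!: nn_integral_cong simp: d_def indicator_def)
    also have "\<dots> = ennreal (1 / ?c) * emeasure M (Y -` (A \<inter> I) \<inter> space M)"
      by (simp add: nn_integral_cmult_indicator emeasure_distr)
    also have "\<dots> = emeasure M (X -` A \<inter> space M)"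
      using pos law[of A] by (simp add: emeasure_eq_measure ennreal_mult[symmetric] vimage_def Int_def conj_commute)
    finally show "emeasure (distr M borel X) A = emeasure (density (distr M borel Y) d) A"
      by (simp add: emeasure_distr)
  qed simp
  moreover have "(\<integral>\<omega>. X \<omega> \<partial>M) = (\<integral>x. x \<partial>distr M borel X)"
    by (rule integral_distr[symmetric]) simp_all
  ultimately have "(\<integral>\<omega>. X \<omega> \<partial>M) = (\<integral>x. x \<partial>density (distr M borel Y) d)" by simp
  also have "\<dots> = (\<integral>\<omega>. d (Y \<omega>) * Y \<omega> \<partial>M)"
    using pos by (subst integral_density) (auto simp: d_def integral_distr)
  also have "\<dots> = (\<integral>\<omega>. Y \<omega> * indicator I (Y \<omega>) \<partial>M) / ?c"
    by (simp add: d_def mult.commute)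
  finally show ?thesis .
qed

end

lemma measurable_hist:
  "(\<And>s. s \<in> {1..<t} \<Longrightarrow> X s \<in> borel_measurable N) \<Longrightarrow> hist X t \<in> measurable N (hist_space t)"
  unfolding hist_def hist_space_def by (rule measurable_restrict) auto

lemma hist_in_space: "hist X t \<omega> \<in> space (hist_space t)"
  by (simp add: hist_def hist_space_def space_PiM)

lemma restrict_hist: "s \<le> t \<Longrightarrow> restrict (hist X t \<omega>) {1..<s} = hist X s \<omega>"
  by (auto simp: hist_def restrict_def fun_eq_iff)

lemma hist_apply: "s \<in> {1..<t} \<Longrightarrow> hist X t \<omega> s = X s \<omega>"
  by (auto simp: hist_def)

lemma restrict_path: "t \<in> {1..n} \<Longrightarrow> restrict (path n X \<omega>) {1..<t} = hist X t \<omega>"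
  by (auto simp: path_def hist_def restrict_def fun_eq_iff)

lemma path_apply: "t \<in> {1..n} \<Longrightarrow> path n X \<omega> t = X t \<omega>"
  by (auto simp: path_def)

lemma path_in_space: "path n X \<omega> \<in> space (path_space n)"
  by (simp add: path_def path_space_def space_PiM)

lemma measurable_path: "(\<And>s. s \<in> {1..n} \<Longrightarrow> X s \<in> borel_measurable N) \<Longrightarrow> path n X \<in> measurable N (path_space n)"
  unfolding path_def path_space_def by (rule measurable_restrict) auto

lemma pathLM_in_space: "pathLM n L M \<omega> \<in> space (pathLM_space n)"
  by (simp add: pathLM_def pathLM_space_def space_PiM space_pair_measure)

section \<open>Conditional distribution functions of a process\<close>

locale cond_cdf_process = prob_space P for P :: "'a measure" +
  fixes n :: nat and M :: "nat \<Rightarrow> 'a \<Rightarrow> real" and F :: "nat \<Rightarrow> (nat \<Rightarrow> real) \<Rightarrow> real \<Rightarrow> real"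
  assumes M_borel: "\<And>t. t \<in> {1..n} \<Longrightarrow> M t \<in> borel_measurable P"
    and F_cond: "cond_cdf P M n F"
begin

lemma F_distribution_function:
  assumes "t \<in> {1..n}" "h \<in> space (hist_space t)"
  shows "distribution_function (F t h)"
proof -
  have "\<forall>h\<in>space (hist_space t). mono (F t h) \<and> (\<forall>x. continuous (at_right x) (F t h)) \<and>
      (F t h \<longlongrightarrow> 0) at_bot \<and> (F t h \<longlongrightarrow> 1) at_top"
    using F_cond assms(1) unfolding cond_cdf_def by blast
  then show ?thesis using assms(2) unfolding distribution_function_def by blast
qed

lemma F_nonneg: "t \<in> {1..n} \<Longrightarrow> 0 \<le> F t (hist X t \<omega>) x"
  by (rule distribution_function_nonneg[OF F_distribution_function[OF _ hist_in_space]])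

lemma F_le_1: "t \<in> {1..n} \<Longrightarrow> F t (hist X t \<omega>) x \<le> 1"
  by (rule distribution_function_le_1[OF F_distribution_function[OF _ hist_in_space]])

lemma F_abs_le_1: "t \<in> {1..n} \<Longrightarrow> \<bar>F t (hist X t \<omega>) x\<bar> \<le> 1"
  using F_nonneg[of t X \<omega> x] F_le_1[of t X \<omega> x] by (simp add: abs_le_iff)

lemma F_borel: "t \<in> {1..n} \<Longrightarrow> (\<lambda>h. F t h x) \<in> borel_measurable (hist_space t)"
  using F_cond unfolding cond_cdf_def by blast

lemma prob_M_le_hist:
  "t \<in> {1..n} \<Longrightarrow> B \<in> sets (hist_space t) \<Longrightarrow>
    prob {\<omega>\<in>space P. M t \<omega> \<le> x \<and> hist M t \<omega> \<in> B} = (\<integral>\<omega>. indicator B (hist M t \<omega>) * F t (hist M t \<omega>) x \<partial>P)"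
  using F_cond unfolding cond_cdf_def by blast

lemma measurable_F_comp:
  assumes t: "t \<in> {1..n}" and h: "h \<in> measurable N (hist_space t)" and x: "x \<in> borel_measurable N"
  shows "(\<lambda>\<omega>. F t (h \<omega>) (x \<omega>)) \<in> borel_measurable N"
proof (rule measurable_right_continuous_comp[where G = "\<lambda>\<omega>. F t (h \<omega>)"])
  have "distribution_function (F t (h \<omega>))" if "\<omega> \<in> space N" for \<omega>
    by (rule F_distribution_function[OF t measurable_space[OF h that]])
  then show "\<And>\<omega>. \<omega> \<in> space N \<Longrightarrow> mono (F t (h \<omega>))"
    and "\<And>\<omega> y. \<omega> \<in> space N \<Longrightarrow> continuous (at_right y) (F t (h \<omega>))"
    by (simp_all add: distribution_function_def)
qed (use measurable_compose[OF h F_borel[OF t]] x in auto)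

lemma measurable_hist_M: "t \<in> {1..n} \<Longrightarrow> hist M t \<in> measurable P (hist_space t)"
  by (rule measurable_hist) (auto intro: M_borel)

lemma integrable_indicator_hist_F:
  assumes t: "t \<in> {1..n}" and [measurable]: "B \<in> sets (hist_space t)" "x \<in> borel_measurable P"
  shows "integrable P (\<lambda>\<omega>. indicator B (hist M t \<omega>) * F t (hist M t \<omega>) (x \<omega>))"
proof (rule integrable_const_bound[where B = 1])
  show "AE \<omega> in P. norm (indicator B (hist M t \<omega>) * F t (hist M t \<omega>) (x \<omega>)) \<le> 1"
    by (intro AE_I2) (auto simp: indicator_def F_abs_le_1[OF t, of M _ "x _"])
  have [measurable]: "(\<lambda>\<omega>. F t (hist M t \<omega>) (x \<omega>)) \<in> borel_measurable P"
    by (rule measurable_F_comp[OF t measurable_hist_M[OF t]]) simp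
  have [measurable]: "hist M t \<in> measurable P (hist_space t)" by (rule measurable_hist_M[OF t])
  show "(\<lambda>\<omega>. indicator B (hist M t \<omega>) * F t (hist M t \<omega>) (x \<omega>)) \<in> borel_measurable P" by measurable
qed

lemma prob_hist_le_finite_valued:
  assumes t: "t \<in> {1..n}" and B[measurable]: "B \<in> sets (hist_space t)"
    and phi[measurable]: "phi \<in> borel_measurable (hist_space t)"
    and D: "finite D" "phi ` space (hist_space t) \<subseteq> D"
  shows "prob {\<omega>\<in>space P. hist M t \<omega> \<in> B \<and> M t \<omega> \<le> phi (hist M t \<omega>)}
       = (\<integral>\<omega>. indicator B (hist M t \<omega>) * F t (hist M t \<omega>) (phi (hist M t \<omega>)) \<partial>P)"
proof -
  let ?H = "hist M t"
  have [measurable]: "?H \<in> measurable P (hist_space t)" "M t \<in> borel_measurable P"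
    using measurable_hist_M M_borel t by auto
  define Bd where "Bd d = B \<inter> {h\<in>space (hist_space t). phi h = d}" for d
  have Bd[measurable]: "Bd d \<in> sets (hist_space t)" for d unfolding Bd_def by measurable
  have "{\<omega>\<in>space P. ?H \<omega> \<in> B \<and> M t \<omega> \<le> phi (?H \<omega>)} = (\<Union>d\<in>D. {\<omega>\<in>space P. M t \<omega> \<le> d \<and> ?H \<omega> \<in> Bd d})"
    using D(2) hist_in_space[of M t] by (auto simp: Bd_def image_subset_iff)
  then have "prob {\<omega>\<in>space P. ?H \<omega> \<in> B \<and> M t \<omega> \<le> phi (?H \<omega>)}
      = (\<Sum>d\<in>D. prob {\<omega>\<in>space P. M t \<omega> \<le> d \<and> ?H \<omega> \<in> Bd d})"
    by (simp, intro measure_finite_Union D) (auto simp: disjoint_family_on_def Bd_def)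
  also have "\<dots> = (\<Sum>d\<in>D. \<integral>\<omega>. indicator (Bd d) (?H \<omega>) * F t (?H \<omega>) d \<partial>P)"
    by (intro sum.cong refl prob_M_le_hist t Bd)
  also have "\<dots> = (\<integral>\<omega>. (\<Sum>d\<in>D. indicator (Bd d) (?H \<omega>) * F t (?H \<omega>) d) \<partial>P)"
    by (rule Bochner_Integration.integral_sum[symmetric]) (rule integrable_indicator_hist_F[OF t Bd], simp)
  also have "\<dots> = (\<integral>\<omega>. indicator B (?H \<omega>) * F t (?H \<omega>) (phi (?H \<omega>)) \<partial>P)"
  proof (rule Bochner_Integration.integral_cong[OF refl])
    fix \<omega>
    have "(\<Sum>d\<in>D. indicator (Bd d) (?H \<omega>) * F t (?H \<omega>) d)
        = (\<Sum>d\<in>D. if phi (?H \<omega>) = d then indicator B (?H \<omega>) * F t (?H \<omega>) (phi (?H \<omega>)) else 0)"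
      using hist_in_space[of M t \<omega>] by (intro sum.cong refl) (auto simp: Bd_def indicator_def)
    also have "\<dots> = indicator B (?H \<omega>) * F t (?H \<omega>) (phi (?H \<omega>))"
      using D hist_in_space[of M t \<omega>] by (simp add: sum.delta image_subset_iff)
    finally show "(\<Sum>d\<in>D. indicator (Bd d) (?H \<omega>) * F t (?H \<omega>) d) = \<dots>" .
  qed
  finally show ?thesis .
qed

lemma tendsto_prob_hist_le_dyadic_approx:
  assumes t: "t \<in> {1..n}" and [measurable]: "B \<in> sets (hist_space t)" "phi \<in> borel_measurable (hist_space t)"
  shows "(\<lambda>k. prob {\<omega>\<in>space P. hist M t \<omega> \<in> B \<and> M t \<omega> \<le> dyadic_approx k (phi (hist M t \<omega>))})
    \<longlonglongrightarrow> prob {\<omega>\<in>space P. hist M t \<omega> \<in> B \<and> M t \<omega> \<le> phi (hist M t \<omega>)}"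
proof (rule tendsto_prob_eventually_mem)
  let ?H = "hist M t"
  have [measurable]: "?H \<in> measurable P (hist_space t)" "M t \<in> borel_measurable P"
    using measurable_hist_M M_borel t by auto
  show "{\<omega>\<in>space P. ?H \<omega> \<in> B \<and> M t \<omega> \<le> dyadic_approx k (phi (?H \<omega>))} \<in> events" for k
    unfolding dyadic_approx_def by measurable
  show "{\<omega>\<in>space P. ?H \<omega> \<in> B \<and> M t \<omega> \<le> phi (?H \<omega>)} \<in> events" by measurable
  fix \<omega> assume "\<omega> \<in> space P"
  show "eventually (\<lambda>k. \<omega> \<in> {\<omega>\<in>space P. ?H \<omega> \<in> B \<and> M t \<omega> \<le> dyadic_approx k (phi (?H \<omega>))}
      \<longleftrightarrow> \<omega> \<in> {\<omega>\<in>space P. ?H \<omega> \<in> B \<and> M t \<omega> \<le> phi (?H \<omega>)}) sequentially"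
  proof (cases "M t \<omega> \<le> phi (?H \<omega>)")
    case True
    show ?thesis using eventually_le_dyadic_approx[of "phi (?H \<omega>)"]
      by eventually_elim (use True in auto)
  next
    case False
    then have "eventually (\<lambda>k. dyadic_approx k (phi (?H \<omega>)) < M t \<omega>) sequentially"
      using order_tendstoD(2)[OF dyadic_approx_tendsto] by simp
    then show ?thesis by eventually_elim (use False in auto)
  qed
qed

lemma tendsto_integral_hist_F_dyadic_approx:
  assumes t: "t \<in> {1..n}" and [measurable]: "B \<in> sets (hist_space t)" "phi \<in> borel_measurable (hist_space t)"
  shows "(\<lambda>k. \<integral>\<omega>. indicator B (hist M t \<omega>) * F t (hist M t \<omega>) (dyadic_approx k (phi (hist M t \<omega>))) \<partial>P)
    \<longlonglongrightarrow> (\<integral>\<omega>. indicator B (hist M t \<omega>) * F t (hist M t \<omega>) (phi (hist M t \<omega>)) \<partial>P)"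
proof (rule integral_dominated_convergence[where w = "\<lambda>_. 1"])
  let ?H = "hist M t"
  have [measurable]: "?H \<in> measurable P (hist_space t)" by (rule measurable_hist_M[OF t])
  show "(\<lambda>\<omega>. indicator B (?H \<omega>) * F t (?H \<omega>) (phi (?H \<omega>))) \<in> borel_measurable P"
    using measurable_F_comp[OF t, of ?H P "\<lambda>\<omega>. phi (?H \<omega>)"] by measurable
  show "(\<lambda>\<omega>. indicator B (?H \<omega>) * F t (?H \<omega>) (dyadic_approx k (phi (?H \<omega>)))) \<in> borel_measurable P" for k
    using measurable_F_comp[OF t, of ?H P "\<lambda>\<omega>. dyadic_approx k (phi (?H \<omega>))"]
    unfolding dyadic_approx_def by measurable
  show "AE \<omega> in P. norm (indicator B (?H \<omega>) * F t (?H \<omega>) (dyadic_approx k (phi (?H \<omega>)))) \<le> 1" for k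
    by (intro AE_I2) (auto simp: indicator_def F_abs_le_1[OF t, of M _ "dyadic_approx k _"])
  show "AE \<omega> in P. (\<lambda>k. indicator B (?H \<omega>) * F t (?H \<omega>) (dyadic_approx k (phi (?H \<omega>))))
      \<longlonglongrightarrow> indicator B (?H \<omega>) * F t (?H \<omega>) (phi (?H \<omega>))"
  proof (rule AE_I2)
    fix \<omega>
    have "continuous (at_right (phi (?H \<omega>))) (F t (?H \<omega>))"
      using F_distribution_function[OF t hist_in_space, of M \<omega>] by (simp add: distribution_function_def)
    then show "(\<lambda>k. indicator B (?H \<omega>) * F t (?H \<omega>) (dyadic_approx k (phi (?H \<omega>))))
        \<longlonglongrightarrow> indicator B (?H \<omega>) * F t (?H \<omega>) (phi (?H \<omega>))"
      by (intro tendsto_mult_left tendsto_dyadic_approx_right_continuous)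
  qed
qed simp

text \<open>Approximate the threshold from above by finitely-valued dyadic thresholds and use right
  continuity of F.\<close>

lemma prob_hist_le_measurable:
  assumes t: "t \<in> {1..n}" and B[measurable]: "B \<in> sets (hist_space t)"
    and phi[measurable]: "phi \<in> borel_measurable (hist_space t)"
  shows "prob {\<omega>\<in>space P. hist M t \<omega> \<in> B \<and> M t \<omega> \<le> phi (hist M t \<omega>)}
       = (\<integral>\<omega>. indicator B (hist M t \<omega>) * F t (hist M t \<omega>) (phi (hist M t \<omega>)) \<partial>P)"
proof -
  have "prob {\<omega>\<in>space P. hist M t \<omega> \<in> B \<and> M t \<omega> \<le> dyadic_approx k (phi (hist M t \<omega>))}
    = (\<integral>\<omega>. indicator B (hist M t \<omega>) * F t (hist M t \<omega>) (dyadic_approx k (phi (hist M t \<omega>))) \<partial>P)" for k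
  proof -
    have "(\<lambda>h. dyadic_approx k (phi h)) \<in> borel_measurable (hist_space t)"
      unfolding dyadic_approx_def by measurable
    then show ?thesis
      by (rule prob_hist_le_finite_valued[OF t B _ finite_imageI[OF finite_atLeastAtMost_int]])
         (auto intro: dyadic_approx_range)
  qed
  then have "(\<lambda>k. prob {\<omega>\<in>space P. hist M t \<omega> \<in> B \<and> M t \<omega> \<le> dyadic_approx k (phi (hist M t \<omega>))})
    \<longlonglongrightarrow> (\<integral>\<omega>. indicator B (hist M t \<omega>) * F t (hist M t \<omega>) (phi (hist M t \<omega>)) \<partial>P)"
    using tendsto_integral_hist_F_dyadic_approx[OF t B phi] by simp
  from LIMSEQ_unique[OF tendsto_prob_hist_le_dyadic_approx[OF t B phi] this] show ?thesis .
qed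

lemma measurable_F_restrict:
  assumes s: "s \<in> {1..n}" "s \<in> I" "{1..<s} \<subseteq> I"
  shows "(\<lambda>p. F s (restrict p {1..<s}) (p s)) \<in> borel_measurable (PiM I (\<lambda>_. borel))"
proof (rule measurable_F_comp[OF s(1)])
  show "(\<lambda>p. restrict p {1..<s}) \<in> measurable (PiM I (\<lambda>_. borel)) (hist_space s)"
    unfolding hist_space_def by (rule measurable_restrict) (use s in \<open>auto intro!: measurable_component_singleton\<close>)
qed (use s in \<open>auto intro!: measurable_component_singleton\<close>)

end

locale continuous_cond_cdf_process = cond_cdf_process +
  assumes F_cont: "\<And>t h. t \<in> {1..n} \<Longrightarrow> h \<in> space (hist_space t) \<Longrightarrow> continuous_on UNIV (F t h)"
begin

lemma prob_hist_F_M_le: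
  assumes t: "t \<in> {1..n}" and B[measurable]: "B \<in> sets (hist_space t)" and v: "0 < v" "v < 1"
  shows "prob {\<omega>\<in>space P. hist M t \<omega> \<in> B \<and> F t (hist M t \<omega>) (M t \<omega>) \<le> v}
       = v * prob {\<omega>\<in>space P. hist M t \<omega> \<in> B}"
proof -
  let ?H = "hist M t"
  have [measurable]: "?H \<in> measurable P (hist_space t)" "M t \<in> borel_measurable P"
    using measurable_hist_M M_borel t by auto
  define s where "s h = uquant (F t h) v" for h
  note F = F_distribution_function[OF t] F_cont[OF t]
  have s_iff: "F t h x \<le> v \<longleftrightarrow> x \<le> s h" if "h \<in> space (hist_space t)" for h x
    using uquant_less_iff[OF F[OF that] v, of x] by (auto simp: s_def not_less[symmetric])
  have [measurable]: "s \<in> borel_measurable (hist_space t)"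
  proof (rule borel_measurableI_less)
    fix w
    have "s h < w \<longleftrightarrow> v < F t h w" if "h \<in> space (hist_space t)" for h
      using uquant_less_iff[OF F[OF that] v] by (simp add: s_def)
    then have "{h\<in>space (hist_space t). s h < w} = {h\<in>space (hist_space t). v < F t h w}" by auto
    also have "\<dots> \<in> sets (hist_space t)" using F_borel[OF t] by measurable
    finally show "{h\<in>space (hist_space t). s h < w} \<in> sets (hist_space t)" .
  qed
  have "prob {\<omega>\<in>space P. ?H \<omega> \<in> B \<and> F t (?H \<omega>) (M t \<omega>) \<le> v}
      = prob {\<omega>\<in>space P. ?H \<omega> \<in> B \<and> M t \<omega> \<le> s (?H \<omega>)}"
  proof -
    have "F t (?H \<omega>) (M t \<omega>) \<le> v \<longleftrightarrow> M t \<omega> \<le> s (?H \<omega>)" for \<omega> by (rule s_iff[OF hist_in_space])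
    then show ?thesis by simp
  qed
  also have "\<dots> = (\<integral>\<omega>. indicator B (?H \<omega>) * F t (?H \<omega>) (s (?H \<omega>)) \<partial>P)"
    by (rule prob_hist_le_measurable[OF t B]) measurable
  also have "\<dots> = (\<integral>\<omega>. v * indicator {\<omega>\<in>space P. ?H \<omega> \<in> B} \<omega> \<partial>P)"
    using distribution_function_uquant[OF F[OF hist_in_space] v]
    by (intro Bochner_Integration.integral_cong) (auto simp: s_def indicator_def)
  also have "\<dots> = v * prob {\<omega>\<in>space P. ?H \<omega> \<in> B}" by simp
  finally show ?thesis .
qed

end

section \<open>The probability integral transform\<close>

locale pit_process = continuous_cond_cdf_process +
  fixes L :: "nat \<Rightarrow> 'a \<Rightarrow> real"
  assumes L_borel: "\<And>t. t \<in> {1..n} \<Longrightarrow> L t \<in> borel_measurable P"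
    and same_law: "distr P (path_space n) (path n M) = distr P (path_space n) (path n L)"
begin

definition pit :: "nat \<Rightarrow> 'a \<Rightarrow> real" where
  "pit t \<omega> = F t (hist L t \<omega>) (L t \<omega>)"

lemma measurable_hist_L: "t \<in> {1..n} \<Longrightarrow> hist L t \<in> measurable P (hist_space t)"
  by (rule measurable_hist) (auto intro: L_borel)

lemma measurable_pit[measurable]: "t \<in> {1..n} \<Longrightarrow> pit t \<in> borel_measurable P"
  unfolding pit_def by (rule measurable_F_comp[OF _ measurable_hist_L L_borel]) auto

lemma pit_nonneg: "t \<in> {1..n} \<Longrightarrow> 0 \<le> pit t \<omega>"
  unfolding pit_def by (rule F_nonneg)

lemma pit_le_1: "t \<in> {1..n} \<Longrightarrow> pit t \<omega> \<le> 1"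
  unfolding pit_def by (rule F_le_1)

lemma prob_path_L_eq_M:
  assumes S: "S \<in> sets (path_space n)"
  shows "prob (path n L -` S \<inter> space P) = prob (path n M -` S \<inter> space P)"
proof -
  have "prob (path n L -` S \<inter> space P) = measure (distr P (path_space n) (path n L)) S"
    by (rule measure_distr[symmetric, OF measurable_path[OF L_borel] S])
  also have "\<dots> = measure (distr P (path_space n) (path n M)) S" by (simp add: same_law)
  also have "\<dots> = prob (path n M -` S \<inter> space P)"
    by (rule measure_distr[OF measurable_path[OF M_borel] S])
  finally show ?thesis .
qed

lemma prob_hist_pit_le:
  assumes t: "t \<in> {1..n}" and B[measurable]: "B \<in> sets (hist_space t)" and v: "0 < v" "v < 1"
  shows "prob {\<omega>\<in>space P. hist L t \<omega> \<in> B \<and> pit t \<omega> \<le> v} = v * prob {\<omega>\<in>space P. hist L t \<omega> \<in> B}"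
proof -
  have [measurable]: "(\<lambda>p. restrict p {1..<t}) \<in> measurable (path_space n) (hist_space t)"
    unfolding hist_space_def path_space_def
    by (rule measurable_restrict) (use t in \<open>auto intro!: measurable_component_singleton\<close>)
  have [measurable]: "(\<lambda>p. F t (restrict p {1..<t}) (p t)) \<in> borel_measurable (path_space n)"
    unfolding path_space_def by (rule measurable_F_restrict) (use t in auto)
  define S where "S = {p\<in>space (path_space n). restrict p {1..<t} \<in> B \<and> F t (restrict p {1..<t}) (p t) \<le> v}"
  define S' where "S' = {p\<in>space (path_space n). restrict p {1..<t} \<in> B}"
  have [measurable]: "S \<in> sets (path_space n)" "S' \<in> sets (path_space n)"
    unfolding S_def S'_def by measurable
  have S: "{\<omega>\<in>space P. hist X t \<omega> \<in> B \<and> F t (hist X t \<omega>) (X t \<omega>) \<le> v} = path n X -` S \<inter> space P" for X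
    using path_in_space[of n X] by (auto simp: S_def restrict_path[OF t, simplified] path_apply[OF t])
  have S': "{\<omega>\<in>space P. hist X t \<omega> \<in> B} = path n X -` S' \<inter> space P" for X
    using path_in_space[of n X] by (auto simp: S'_def restrict_path[OF t, simplified])
  have "prob {\<omega>\<in>space P. hist L t \<omega> \<in> B \<and> pit t \<omega> \<le> v}
      = prob {\<omega>\<in>space P. hist M t \<omega> \<in> B \<and> F t (hist M t \<omega>) (M t \<omega>) \<le> v}"
    unfolding pit_def S by (rule prob_path_L_eq_M) simp
  also have "\<dots> = v * prob {\<omega>\<in>space P. hist M t \<omega> \<in> B}" by (rule prob_hist_F_M_le[OF t B v])
  also have "\<dots> = v * prob {\<omega>\<in>space P. hist L t \<omega> \<in> B}"
    unfolding S' by (simp add: prob_path_L_eq_M)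
  finally show ?thesis .
qed

lemma prob_hist_pit_le_uniform_cdf:
  assumes t: "t \<in> {1..n}" and B[measurable]: "B \<in> sets (hist_space t)"
  shows "prob {\<omega>\<in>space P. hist L t \<omega> \<in> B \<and> pit t \<omega> \<le> x} = uniform_cdf x * prob {\<omega>\<in>space P. hist L t \<omega> \<in> B}"
proof -
  have [measurable]: "hist L t \<in> measurable P (hist_space t)" "pit t \<in> borel_measurable P"
    using measurable_hist_L measurable_pit t by auto
  let ?p = "\<lambda>x. prob {\<omega>\<in>space P. hist L t \<omega> \<in> B \<and> pit t \<omega> \<le> x}"
  consider "x < 0" | "x = 0" | "0 < x" "x < 1" | "1 \<le> x" by linarith
  then show ?thesis
  proof cases
    case 1
    then have "{\<omega>\<in>space P. hist L t \<omega> \<in> B \<and> pit t \<omega> \<le> x} = {}"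
      using pit_nonneg[OF t] by (auto simp: not_le intro: less_le_trans)
    then have "?p x = 0" by (simp only: measure_empty)
    then show ?thesis using 1 by (simp add: uniform_cdf_def)
  next
    case 2
    have "?p 0 \<le> w" if "0 < w" "w < 1" for w
    proof -
      have "?p 0 \<le> ?p w" using that by (intro finite_measure_mono) auto
      also have "\<dots> = w * prob {\<omega>\<in>space P. hist L t \<omega> \<in> B}" by (rule prob_hist_pit_le[OF t B that])
      also have "\<dots> \<le> w" using that by (simp add: mult_left_le)
      finally show ?thesis .
    qed
    then have "?p 0 \<le> 0" by (intro dense_ge_bounded[of 0 1]) auto
    then show ?thesis using 2 measure_nonneg[of P] by (simp add: uniform_cdf_def antisym)
  next
    case 3
    then show ?thesis using prob_hist_pit_le[OF t B] by (simp add: uniform_cdf_def)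
  next
    case 4
    then have "{\<omega>\<in>space P. hist L t \<omega> \<in> B \<and> pit t \<omega> \<le> x} = {\<omega>\<in>space P. hist L t \<omega> \<in> B}"
      using pit_le_1[OF t] by (auto intro: order_trans)
    then show ?thesis using 4 by (simp add: uniform_cdf_def)
  qed
qed

lemma prob_hist_pit_greater:
  assumes t: "t \<in> {1..n}" and B[measurable]: "B \<in> sets (hist_space t)"
  shows "prob {\<omega>\<in>space P. hist L t \<omega> \<in> B \<and> x < pit t \<omega>}
       = (1 - uniform_cdf x) * prob {\<omega>\<in>space P. hist L t \<omega> \<in> B}"
proof -
  have [measurable]: "hist L t \<in> measurable P (hist_space t)" "pit t \<in> borel_measurable P"
    using measurable_hist_L measurable_pit t by auto
  have "prob {\<omega>\<in>space P. hist L t \<omega> \<in> B} =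
      prob {\<omega>\<in>space P. hist L t \<omega> \<in> B \<and> pit t \<omega> \<le> x} + prob {\<omega>\<in>space P. hist L t \<omega> \<in> B \<and> x < pit t \<omega>}"
    by (subst finite_measure_Union[symmetric]) (auto intro!: arg_cong[where f = prob])
  then show ?thesis using prob_hist_pit_le_uniform_cdf[OF t B, of x] by (simp add: algebra_simps)
qed

lemma prob_pit_greater_insert:
  assumes t: "t \<in> {1..n}" and J: "finite J" "J \<subseteq> {1..<t}"
  shows "prob {\<omega>\<in>space P. \<forall>s\<in>insert t J. x s < pit s \<omega>}
    = (1 - uniform_cdf (x t)) * prob {\<omega>\<in>space P. \<forall>s\<in>J. x s < pit s \<omega>}"
proof -
  define B where "B = {h\<in>space (hist_space t). \<forall>s\<in>J. x s < F s (restrict h {1..<s}) (h s)}"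
  have B[measurable]: "B \<in> sets (hist_space t)" unfolding B_def
  proof (rule sets.sets_Collect_finite_All[OF _ J(1)])
    fix s assume "s \<in> J"
    then have "(\<lambda>h. F s (restrict h {1..<s}) (h s)) \<in> borel_measurable (hist_space t)"
      unfolding hist_space_def using J(2) t by (intro measurable_F_restrict) auto
    then show "{h \<in> space (hist_space t). x s < F s (restrict h {1..<s}) (h s)} \<in> sets (hist_space t)"
      by measurable
  qed
  have pit_hist: "F s (restrict (hist L t \<omega>) {1..<s}) (hist L t \<omega> s) = pit s \<omega>" if "s \<in> J" for s \<omega>
  proof -
    have "s \<le> t" "s \<in> {1..<t}" using that J(2) by auto
    then show ?thesis unfolding pit_def by (simp only: restrict_hist hist_apply)
  qed
  have "hist L t \<omega> \<in> B \<longleftrightarrow> (\<forall>s\<in>J. x s < pit s \<omega>)" for \<omega>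
    using hist_in_space[of L t \<omega>] pit_hist[of _ \<omega>] unfolding B_def by simp
  then have "{\<omega>\<in>space P. \<forall>s\<in>insert t J. x s < pit s \<omega>} = {\<omega>\<in>space P. hist L t \<omega> \<in> B \<and> x t < pit t \<omega>}"
    and "{\<omega>\<in>space P. hist L t \<omega> \<in> B} = {\<omega>\<in>space P. \<forall>s\<in>J. x s < pit s \<omega>}"
    by auto
  then show ?thesis using prob_hist_pit_greater[OF t B] by simp
qed

lemma prob_pit_greater_all:
  assumes "J \<subseteq> {1..n}"
  shows "prob {\<omega>\<in>space P. \<forall>t\<in>J. x t < pit t \<omega>} = (\<Prod>t\<in>J. 1 - uniform_cdf (x t))"
proof -
  have "prob {\<omega>\<in>space P. \<forall>t\<in>J. x t < pit t \<omega>} = (\<Prod>t\<in>J. 1 - uniform_cdf (x t))"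
    if "k \<le> n" "J \<subseteq> {1..k}" for k J
    using that
  proof (induction k arbitrary: J)
    case 0
    then show ?case by (simp add: prob_space)
  next
    case (Suc k)
    have J': "J - {Suc k} \<subseteq> {1..k}" "finite (J - {Suc k})"
      using Suc.prems by (auto simp: le_Suc_eq finite_subset)
    show ?case
    proof (cases "Suc k \<in> J")
      case False
      then have "J \<subseteq> {1..k}" using Suc.prems by (auto simp: le_Suc_eq)
      then show ?thesis using Suc.IH Suc.prems by simp
    next
      case True
      then have J_eq: "insert (Suc k) (J - {Suc k}) = J" by blast
      have "prob {\<omega>\<in>space P. \<forall>s\<in>J. x s < pit s \<omega>}
          = (1 - uniform_cdf (x (Suc k))) * prob {\<omega>\<in>space P. \<forall>s\<in>J - {Suc k}. x s < pit s \<omega>}"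
        by (rule prob_pit_greater_insert[of "Suc k" "J - {Suc k}", unfolded J_eq]) (use J' Suc.prems in auto)
      also have "\<dots> = (\<Prod>s\<in>J. 1 - uniform_cdf (x s))"
        using Suc.IH[OF _ J'(1)] Suc.prems J'(2) True by (simp add: prod.remove)
      finally show ?thesis .
    qed
  qed
  then show ?thesis using assms by blast
qed

lemma prob_pit_greater: "t \<in> {1..n} \<Longrightarrow> prob {\<omega>\<in>space P. x < pit t \<omega>} = 1 - uniform_cdf x"
  using prob_pit_greater_all[of "{t}" "\<lambda>_. x"] by simp

lemma prob_pit_eq:
  assumes t: "t \<in> {1..n}"
  shows "prob {\<omega>\<in>space P. pit t \<omega> = y} = 0"
proof -
  have [measurable]: "pit t \<in> borel_measurable P" by (rule measurable_pit[OF t])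
  have "prob {\<omega>\<in>space P. pit t \<omega> = y} \<le> 0 + e" if "0 < e" for e
  proof -
    have "prob {\<omega>\<in>space P. pit t \<omega> = y}
        \<le> prob ({\<omega>\<in>space P. y - e < pit t \<omega>} - {\<omega>\<in>space P. y < pit t \<omega>})"
      using that by (intro finite_measure_mono) auto
    also have "\<dots> = uniform_cdf y - uniform_cdf (y - e)"
      using that by (subst finite_measure_Diff) (auto simp: prob_pit_greater[OF t])
    also have "\<dots> \<le> e" using that by (auto simp: uniform_cdf_def max_def min_def)
    finally show ?thesis by simp
  qed
  then show ?thesis using measure_nonneg[of P] by (meson antisym field_le_epsilon)
qed

definition pit_greater_sets :: "nat \<Rightarrow> 'a set set" where
  "pit_greater_sets t = {{\<omega>\<in>space P. x < pit t \<omega>} | x. True}"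

lemma indep_sets_pit: "indep_sets pit_greater_sets {1..n}"
proof (rule indep_setsI)
  show "pit_greater_sets t \<subseteq> events" if "t \<in> {1..n}" for t
    using measurable_pit[OF that] by (auto simp: pit_greater_sets_def)
next
  fix A J assume J: "J \<noteq> {}" "J \<subseteq> {1..n}" "finite J"
    and A: "\<forall>t\<in>J. A t \<in> pit_greater_sets t"
  then have "\<forall>t\<in>J. \<exists>x. A t = {\<omega>\<in>space P. x < pit t \<omega>}" by (auto simp: pit_greater_sets_def)
  then obtain x where x: "\<And>t. t \<in> J \<Longrightarrow> A t = {\<omega>\<in>space P. x t < pit t \<omega>}"
    by (metis bchoice)
  have "(\<Inter>t\<in>J. A t) = {\<omega>\<in>space P. \<forall>t\<in>J. x t < pit t \<omega>}" using J(1) x by auto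
  then have "prob (\<Inter>t\<in>J. A t) = (\<Prod>t\<in>J. 1 - uniform_cdf (x t))" using prob_pit_greater_all[OF J(2)] by simp
  also have "\<dots> = (\<Prod>t\<in>J. prob (A t))" using x J(2) prob_pit_greater by (intro prod.cong) auto
  finally show "prob (\<Inter>t\<in>J. A t) = (\<Prod>t\<in>J. prob (A t))" .
qed

lemma pit_eq_pathLM:
  assumes t: "t \<in> {1..n}"
  shows "pit t \<omega> = F t (restrict (\<lambda>s. fst (pathLM n L M \<omega> s)) {1..<t}) (fst (pathLM n L M \<omega> t))"
proof -
  have "restrict (\<lambda>s. fst (pathLM n L M \<omega> s)) {1..<t} = hist L t \<omega>"
    using t by (auto simp: pathLM_def hist_def restrict_def fun_eq_iff)
  moreover have "fst (pathLM n L M \<omega> t) = L t \<omega>" using t by (simp add: pathLM_def)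
  ultimately show ?thesis by (simp add: pit_def)
qed

lemma pit_greater_all_in_gen_sets:
  assumes J: "finite J" "J \<subseteq> {1..n}"
  shows "{\<omega>\<in>space P. \<forall>t\<in>J. x t < pit t \<omega>} \<in> gen_sets P (pathLM n L M) (pathLM_space n)"
proof -
  let ?pit = "\<lambda>t p. F t (restrict (\<lambda>s. fst (p s)) {1..<t}) (fst (p t))"
  have fst_comp: "(\<lambda>p. fst (p s)) \<in> borel_measurable (pathLM_space n)" if "s \<in> {1..n}" for s
    unfolding pathLM_space_def
    by (rule measurable_compose[of "\<lambda>p. p s" _ "borel \<Otimes>\<^sub>M borel" fst])
       (use that in \<open>auto intro: measurable_component_singleton\<close>)
  have pit_borel: "?pit t \<in> borel_measurable (pathLM_space n)" if t: "t \<in> {1..n}" for t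
  proof (rule measurable_F_comp[OF t])
    show "(\<lambda>p. restrict (\<lambda>s. fst (p s)) {1..<t}) \<in> measurable (pathLM_space n) (hist_space t)"
      unfolding hist_space_def by (rule measurable_restrict) (use fst_comp t in auto)
  qed (rule fst_comp[OF t])
  have S: "{p\<in>space (pathLM_space n). \<forall>t\<in>J. x t < ?pit t p} \<in> sets (pathLM_space n)"
  proof (rule sets.sets_Collect_finite_All[OF _ J(1)])
    fix t assume "t \<in> J"
    then have [measurable]: "?pit t \<in> borel_measurable (pathLM_space n)" using pit_borel J(2) by auto
    show "{p \<in> space (pathLM_space n). x t < ?pit t p} \<in> sets (pathLM_space n)" by measurable
  qed
  have "{\<omega>\<in>space P. \<forall>t\<in>J. x t < pit t \<omega>}
      = pathLM n L M -` {p\<in>space (pathLM_space n). \<forall>t\<in>J. x t < ?pit t p} \<inter> space P"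
    using pit_eq_pathLM J(2) pathLM_in_space by (auto simp: subset_iff)
  then show ?thesis unfolding gen_sets_def using S by blast
qed

end

section \<open>Mixtures of distortion components\<close>

lemma distortion_mono: "distortion h \<Longrightarrow> u \<in> {0..1} \<Longrightarrow> w \<in> {0..1} \<Longrightarrow> u \<le> w \<Longrightarrow> h u \<le> h w"
  unfolding distortion_def by (auto simp: mono_on_def)

locale distortion_mixture = prob_space P for P :: "'a measure" +
  fixes g gr gl gc :: "real \<Rightarrow> real" and cr cl cc :: real
    and Gr Gl Gc :: "'a \<Rightarrow> real" and C :: "'a \<Rightarrow> comp"
  assumes decomp: "distortion_decomp g cr cl cc gr gl gc"
    and Gr_borel[measurable]: "Gr \<in> borel_measurable P"
    and Gl_borel[measurable]: "Gl \<in> borel_measurable P"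
    and Gc_borel[measurable]: "Gc \<in> borel_measurable P"
    and C_measurable[measurable]: "C \<in> measurable P (count_space UNIV)"
    and Gr_law: "\<And>u. u \<in> {0..1} \<Longrightarrow> prob {\<omega>\<in>space P. Gr \<omega> \<le> u} = gr u"
    and Gl_law: "\<And>u. u \<in> {0..1} \<Longrightarrow> prob {\<omega>\<in>space P. Gl \<omega> < u} = gl u"
    and Gc_law: "\<And>u. u \<in> {0..1} \<Longrightarrow> prob {\<omega>\<in>space P. Gc \<omega> \<le> u} = gc u"
    and C_indep: "\<And>A. A \<in> sets borel \<Longrightarrow> prob {\<omega>\<in>space P. C \<omega> = CompR \<and> Gr \<omega> \<in> A} = cr * prob {\<omega>\<in>space P. Gr \<omega> \<in> A}"
      "\<And>A. A \<in> sets borel \<Longrightarrow> prob {\<omega>\<in>space P. C \<omega> = CompL \<and> Gl \<omega> \<in> A} = cl * prob {\<omega>\<in>space P. Gl \<omega> \<in> A}"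
      "\<And>A. A \<in> sets borel \<Longrightarrow> prob {\<omega>\<in>space P. C \<omega> = CompC \<and> Gc \<omega> \<in> A} = cc * prob {\<omega>\<in>space P. Gc \<omega> \<in> A}"
begin

abbreviation G :: "'a \<Rightarrow> real" where "G \<equiv> mixG Gr Gl Gc C"

lemma g_decomp: "u \<in> {0..1} \<Longrightarrow> g u = cr * gr u + cl * gl u + cc * gc u"
  and coeffs_nonneg: "0 \<le> cr" "0 \<le> cl" "0 \<le> cc"
  and distortion_g: "distortion g" and distortion_gl: "distortion gl"
  using decomp unfolding distortion_decomp_def lc_step_distortion_def by auto

lemma measurable_mixG[measurable]: "G \<in> borel_measurable P"
proof -
  have "G = (\<lambda>\<omega>. if C \<omega> = CompR then Gr \<omega> else if C \<omega> = CompL then Gl \<omega> else Gc \<omega>)"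
    by (auto simp: mixG_def fun_eq_iff split: comp.split)
  also have "\<dots> \<in> borel_measurable P" by measurable
  finally show ?thesis .
qed

lemma prob_mixG:
  assumes [measurable]: "A \<in> sets borel"
  shows "prob {\<omega>\<in>space P. G \<omega> \<in> A} =
    cr * prob {\<omega>\<in>space P. Gr \<omega> \<in> A} + cl * prob {\<omega>\<in>space P. Gl \<omega> \<in> A} + cc * prob {\<omega>\<in>space P. Gc \<omega> \<in> A}"
proof -
  let ?R = "{\<omega>\<in>space P. C \<omega> = CompR \<and> Gr \<omega> \<in> A}"
  let ?L = "{\<omega>\<in>space P. C \<omega> = CompL \<and> Gl \<omega> \<in> A}"
  let ?C = "{\<omega>\<in>space P. C \<omega> = CompC \<and> Gc \<omega> \<in> A}"
  have ev: "?R \<in> events" "?L \<in> events" "?C \<in> events" by measurable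
  have disj: "(?R \<union> ?L) \<inter> ?C = {}" "?R \<inter> ?L = {}" by auto
  have "{\<omega>\<in>space P. G \<omega> \<in> A} = ?R \<union> ?L \<union> ?C"
  proof (intro set_eqI)
    fix \<omega> show "\<omega> \<in> {\<omega>\<in>space P. G \<omega> \<in> A} \<longleftrightarrow> \<omega> \<in> ?R \<union> ?L \<union> ?C"
      by (cases "C \<omega>") (simp_all add: mixG_def)
  qed
  moreover have "prob (?R \<union> ?L \<union> ?C) = prob (?R \<union> ?L) + prob ?C"
    by (rule finite_measure_Union[OF sets.Un[OF ev(1,2)] ev(3) disj(1)])
  moreover have "prob (?R \<union> ?L) = prob ?R + prob ?L" by (rule finite_measure_Union[OF ev(1,2) disj(2)])
  ultimately show ?thesis by (simp add: C_indep)
qed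

lemma prob_mixG_less_le:
  assumes b: "b \<in> {0..1}"
  shows "prob {\<omega>\<in>space P. G \<omega> < b} \<le> g b"
proof -
  have "prob {\<omega>\<in>space P. Gr \<omega> < b} \<le> prob {\<omega>\<in>space P. Gr \<omega> \<le> b}"
    and "prob {\<omega>\<in>space P. Gc \<omega> < b} \<le> prob {\<omega>\<in>space P. Gc \<omega> \<le> b}"
    by (intro finite_measure_mono; force)+
  then show ?thesis
    using prob_mixG[of "{..<b}"] g_decomp[OF b] Gr_law[OF b] Gl_law[OF b] Gc_law[OF b] coeffs_nonneg
    by (auto intro!: add_mono mult_left_mono)
qed

lemma le_prob_mixG_less:
  assumes v: "v \<in> {0..1}" "v < b" and b: "b \<in> {0..1}"
  shows "g v \<le> prob {\<omega>\<in>space P. G \<omega> < b}"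
proof -
  have "prob {\<omega>\<in>space P. Gr \<omega> \<le> v} \<le> prob {\<omega>\<in>space P. Gr \<omega> < b}"
    and "prob {\<omega>\<in>space P. Gc \<omega> \<le> v} \<le> prob {\<omega>\<in>space P. Gc \<omega> < b}"
    using v by (intro finite_measure_mono; force)+
  moreover have "gl v \<le> gl b" using distortion_mono[OF distortion_gl v(1) b] v(2) by simp
  ultimately show ?thesis
    using prob_mixG[of "{..<b}"] g_decomp[OF v(1)] Gr_law[OF v(1)] Gl_law[OF b] Gc_law[OF v(1)] coeffs_nonneg
    by (auto intro!: add_mono mult_left_mono)
qed

lemma prob_mixG_less:
  assumes b: "b \<in> {0..1}" and cont: "continuous (at b within {0..1}) g"
  shows "prob {\<omega>\<in>space P. G \<omega> < b} = g b"
proof (cases "b = 0")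
  case True
  then show ?thesis using prob_mixG_less_le[OF b] distortion_g measure_nonneg[of P]
    by (simp add: distortion_def antisym)
next
  case False
  have "g b \<le> prob {\<omega>\<in>space P. G \<omega> < b} + e" if e: "e > 0" for e
  proof -
    obtain d where d: "d > 0" "\<forall>x\<in>{0..1}. dist x b < d \<longrightarrow> dist (g x) (g b) < e"
      using cont e unfolding continuous_within_eps_delta by blast
    define v where "v = max 0 (b - d / 2)"
    have v: "v \<in> {0..1}" "v < b" "b - d / 2 \<le> v" using b False d(1) unfolding v_def by auto
    then have "dist v b < d" using d(1) by (simp add: dist_real_def)
    then have "\<bar>g v - g b\<bar> < e" using d(2) v(1) by (simp add: dist_real_def)
    moreover have "g v \<le> prob {\<omega>\<in>space P. G \<omega> < b}" by (rule le_prob_mixG_less[OF v(1,2) b])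
    ultimately show ?thesis by linarith
  qed
  then have "g b \<le> prob {\<omega>\<in>space P. G \<omega> < b}" by (rule field_le_epsilon)
  then show ?thesis using prob_mixG_less_le[OF b] by simp
qed

lemma prob_mixG_eq_0:
  assumes cont: "continuous (at 0 within {0..1}) g"
  shows "prob {\<omega>\<in>space P. G \<omega> = 0} = 0"
proof -
  have "prob {\<omega>\<in>space P. G \<omega> = 0} \<le> 0 + e" if "e > 0" for e
  proof -
    obtain d where d: "d > 0" "\<forall>x\<in>{0..1}. dist x 0 < d \<longrightarrow> dist (g x) (g 0) < e"
      using cont \<open>e > 0\<close> unfolding continuous_within_eps_delta by blast
    define v where "v = min 1 (d / 2)"
    have v: "v \<in> {0..1}" "0 < v" "v < d" using d(1) unfolding v_def by auto
    have "prob {\<omega>\<in>space P. G \<omega> = 0} \<le> prob {\<omega>\<in>space P. G \<omega> < v}"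
      using v(2) by (intro finite_measure_mono) auto
    also have "\<dots> \<le> g v" by (rule prob_mixG_less_le[OF v(1)])
    also have "\<dots> < e" using d(2) v distortion_g by (auto simp: dist_real_def distortion_def abs_less_iff)
    finally show ?thesis by simp
  qed
  then have "prob {\<omega>\<in>space P. G \<omega> = 0} \<le> 0" by (rule field_le_epsilon)
  then show ?thesis using measure_nonneg[of P] by (simp add: antisym)
qed

end

section \<open>The violation indicators\<close>

locale violation_indicators = pit_process P n M F L + distortion_mixture P g gr gl gc cr cl cc Gr Gl Gc C
  for P :: "'a measure" and n M F L g gr gl gc cr cl cc Gr Gl Gc C +
  fixes m :: nat and \<alpha> :: "nat \<Rightarrow> real" and Gt :: "nat \<Rightarrow> nat \<Rightarrow> 'a \<Rightarrow> real" and Ct :: "nat \<Rightarrow> nat \<Rightarrow> 'a \<Rightarrow> comp"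
  assumes alpha0: "\<alpha> 0 = 0" and alpha1: "\<alpha> (m + 1) = 1"
    and alpha_mono: "\<And>j. j \<le> m \<Longrightarrow> \<alpha> j < \<alpha> (Suc j)"
    and g_cont: "\<And>j. j \<le> m + 1 \<Longrightarrow> continuous (at (\<alpha> j) within {0..1}) g"
    and g_incr: "\<And>j. j \<in> {1..m+1} \<Longrightarrow> g (\<alpha> j) - g (\<alpha> (j - 1)) \<noteq> 0"
    and Gt_borel: "\<And>t j. t \<in> {1..n} \<Longrightarrow> j \<in> {1..m+1} \<Longrightarrow> Gt t j \<in> borel_measurable P"
    and Gt_law: "\<And>t j A. t \<in> {1..n} \<Longrightarrow> j \<in> {1..m+1} \<Longrightarrow> A \<in> sets borel \<Longrightarrow>
        prob (Gt t j -` A \<inter> space P) = prob {\<omega>\<in>space P. G \<omega> \<in> A \<inter> {\<alpha> (j - 1)..<\<alpha> j}}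
          / prob {\<omega>\<in>space P. G \<omega> \<in> {\<alpha> (j - 1)..<\<alpha> j}}"
    and Ct_measurable: "\<And>t j. t \<in> {1..n} \<Longrightarrow> j \<in> {1..m+1} \<Longrightarrow> Ct t j \<in> measurable P (count_space UNIV)"
    and indep_LM_Gt_Ct: "indep_sets
        (\<lambda>i. case i of
              S2_LM \<Rightarrow> gen_sets P (pathLM n L M) (pathLM_space n)
            | S2_G t j \<Rightarrow> gen_sets P (Gt t j) borel
            | S2_C t j \<Rightarrow> gen_sets P (Ct t j) (count_space UNIV))
        ({S2_LM} \<union> {S2_G t j | t j. t \<in> {1..n} \<and> j \<in> {1..m+1}}
                  \<union> {S2_C t j | t j. t \<in> {1..n} \<and> j \<in> {1..m+1}})"
begin

abbreviation cell :: "nat \<Rightarrow> real set" where "cell j \<equiv> {\<alpha> (j - 1)..<\<alpha> j}"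

lemma alpha_le: "j \<le> k \<Longrightarrow> k \<le> m + 1 \<Longrightarrow> \<alpha> j \<le> \<alpha> k"
  by (rule lift_Suc_mono_le_ivl[where N = "{..m}"]) (auto intro: less_imp_le alpha_mono)

lemma alpha_in_unit: "j \<le> m + 1 \<Longrightarrow> \<alpha> j \<in> {0..1}"
  using alpha_le[of 0 j] alpha_le[of j "m + 1"] alpha0 alpha1 by auto

lemma prob_mixG_cell:
  assumes j: "j \<in> {1..m+1}"
  shows "prob {\<omega>\<in>space P. G \<omega> \<in> cell j} = g (\<alpha> j) - g (\<alpha> (j - 1))"
proof -
  have "{\<omega>\<in>space P. G \<omega> \<in> cell j} = {\<omega>\<in>space P. G \<omega> < \<alpha> j} - {\<omega>\<in>space P. G \<omega> < \<alpha> (j - 1)}" by auto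
  also have "prob \<dots> = prob {\<omega>\<in>space P. G \<omega> < \<alpha> j} - prob {\<omega>\<in>space P. G \<omega> < \<alpha> (j - 1)}"
    using alpha_le[of "j - 1" j] j by (intro finite_measure_Diff) auto
  also have "\<dots> = g (\<alpha> j) - g (\<alpha> (j - 1))"
  proof -
    have "j \<le> m + 1" "j - 1 \<le> m + 1" using j by auto
    then show ?thesis using prob_mixG_less[OF alpha_in_unit g_cont] by simp
  qed
  finally show ?thesis .
qed

lemma prob_mixG_cell_pos:
  assumes j: "j \<in> {1..m+1}"
  shows "0 < prob {\<omega>\<in>space P. G \<omega> \<in> cell j}"
  using g_incr[OF j] measure_nonneg[of P "{\<omega>\<in>space P. G \<omega> \<in> cell j}"] unfolding prob_mixG_cell[OF j]
  by linarith

lemma AE_Gt_in_unit: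
  assumes t: "t \<in> {1..n}" and j: "j \<in> {1..m+1}"
  shows "AE \<omega> in P. 0 < Gt t j \<omega> \<and> Gt t j \<omega> < 1"
proof (rule AE_of_prob_eq_0)
  have [measurable]: "Gt t j \<in> borel_measurable P" by (rule Gt_borel[OF t j])
  let ?c = "prob {\<omega>\<in>space P. G \<omega> \<in> cell j}"
  have "0 \<le> \<alpha> (j - 1)" "\<alpha> j \<le> 1" using alpha_in_unit[of "j - 1"] alpha_in_unit[of j] j by auto
  then have "- {0<..<1} \<inter> cell j \<subseteq> {0}" by auto
  then have "prob {\<omega>\<in>space P. G \<omega> \<in> - {0<..<1} \<inter> cell j} \<le> prob {\<omega>\<in>space P. G \<omega> = 0}"
    by (intro finite_measure_mono) auto
  then have "prob {\<omega>\<in>space P. G \<omega> \<in> - {0<..<1} \<inter> cell j} = 0"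
    using prob_mixG_eq_0 g_cont[of 0] alpha0 measure_nonneg[of P] by (simp add: antisym)
  moreover have "{\<omega>\<in>space P. \<not> (0 < Gt t j \<omega> \<and> Gt t j \<omega> < 1)} = Gt t j -` (- {0<..<1}) \<inter> space P" by auto
  ultimately show "prob {\<omega>\<in>space P. \<not> (0 < Gt t j \<omega> \<and> Gt t j \<omega> < 1)} = 0"
    by (simp add: Gt_law[OF t j])
qed (use Gt_borel[OF t j] in measurable)

lemma integral_Gt:
  assumes t: "t \<in> {1..n}" and j: "j \<in> {1..m+1}"
  shows "(\<integral>\<omega>. Gt t j \<omega> \<partial>P) = (\<integral>\<omega>. G \<omega> * indicator (cell j) (G \<omega>) \<partial>P) / (g (\<alpha> j) - g (\<alpha> (j - 1)))"
proof -
  have "(\<integral>\<omega>. Gt t j \<omega> \<partial>P) = (\<integral>\<omega>. G \<omega> * indicator (cell j) (G \<omega>) \<partial>P) / prob {\<omega>\<in>space P. G \<omega> \<in> cell j}"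
    by (rule integral_conditional_law[OF Gt_borel[OF t j] measurable_mixG _ prob_mixG_cell_pos[OF j]])
       (simp_all add: Gt_law[OF t j])
  then show ?thesis by (simp only: prob_mixG_cell[OF j])
qed

definition LM_Gt_Ct_sets :: "src2 \<Rightarrow> 'a set set" where
  "LM_Gt_Ct_sets i = (case i of
      S2_LM \<Rightarrow> gen_sets P (pathLM n L M) (pathLM_space n)
    | S2_G t j \<Rightarrow> gen_sets P (Gt t j) borel
    | S2_C t j \<Rightarrow> gen_sets P (Ct t j) (count_space UNIV))"

definition LM_Gt_Ct_index :: "src2 set" where
  "LM_Gt_Ct_index = {S2_LM} \<union> {S2_G t j | t j. t \<in> {1..n} \<and> j \<in> {1..m+1}}
                  \<union> {S2_C t j | t j. t \<in> {1..n} \<and> j \<in> {1..m+1}}"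

definition pit_Gt :: "nat + src2 \<Rightarrow> 'a \<Rightarrow> real" where
  "pit_Gt i = (case i of Inl t \<Rightarrow> pit t | Inr (S2_G t j) \<Rightarrow> Gt t j | Inr _ \<Rightarrow> (\<lambda>_. 0))"

definition pit_Gt_index :: "(nat + src2) set" where
  "pit_Gt_index = {1..n} <+> {S2_G t j | t j. t \<in> {1..n} \<and> j \<in> {1..m+1}}"

lemma indep_sets_pit_LM_Gt_Ct:
  "indep_sets (case_sum pit_greater_sets LM_Gt_Ct_sets) ({1..n} <+> (LM_Gt_Ct_index - {S2_LM}))"
proof (rule indep_sets_refine[OF _ _ indep_sets_pit])
  show "indep_sets LM_Gt_Ct_sets LM_Gt_Ct_index"
    using indep_LM_Gt_Ct unfolding LM_Gt_Ct_sets_def LM_Gt_Ct_index_def .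
  show "S2_LM \<in> LM_Gt_Ct_index" by (simp add: LM_Gt_Ct_index_def)
  fix K A assume K: "finite K" "K \<noteq> {}" "K \<subseteq> {1..n}" and A: "\<And>t. t \<in> K \<Longrightarrow> A t \<in> pit_greater_sets t"
  then have "\<forall>t\<in>K. \<exists>x. A t = {\<omega>\<in>space P. x < pit t \<omega>}" by (auto simp: pit_greater_sets_def)
  then obtain x where x: "\<And>t. t \<in> K \<Longrightarrow> A t = {\<omega>\<in>space P. x t < pit t \<omega>}" by (metis bchoice)
  then have "(\<Inter>t\<in>K. A t) = {\<omega>\<in>space P. \<forall>t\<in>K. x t < pit t \<omega>}" using K(2) by auto
  then show "(\<Inter>t\<in>K. A t) \<in> LM_Gt_Ct_sets S2_LM"
    using pit_greater_all_in_gen_sets[OF K(1,3)] by (simp add: LM_Gt_Ct_sets_def)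
qed

lemma pit_preimage_in_sigma:
  assumes t: "t \<in> {1..n}" and A: "A \<in> sets borel"
  shows "pit t -` A \<inter> space P \<in> sigma_sets (space P) (pit_greater_sets t)"
proof -
  have E: "pit_greater_sets t \<subseteq> Pow (space P)" by (auto simp: pit_greater_sets_def)
  have "pit t \<in> borel_measurable (sigma (space P) (pit_greater_sets t))"
  proof (rule borel_measurableI_greater)
    fix y
    have "{\<omega>\<in>space P. y < pit t \<omega>} \<in> sigma_sets (space P) (pit_greater_sets t)"
      by (rule sigma_sets.Basic) (auto simp: pit_greater_sets_def)
    then show "{\<omega>\<in>space (sigma (space P) (pit_greater_sets t)). y < pit t \<omega>} \<in> sets (sigma (space P) (pit_greater_sets t))"
      using E by (simp add: sets_measure_of space_measure_of_conv)
  qed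
  from measurable_sets[OF this A] show ?thesis using E by (simp add: sets_measure_of space_measure_of_conv)
qed

lemma Int_stable_pit_LM_Gt_Ct: "Int_stable (case_sum pit_greater_sets LM_Gt_Ct_sets i)"
proof (cases i)
  case (Inl t)
  show ?thesis unfolding Inl sum.simps
  proof (rule Int_stableI)
    fix a b assume "a \<in> pit_greater_sets t" "b \<in> pit_greater_sets t"
    then obtain x y where "a = {\<omega>\<in>space P. x < pit t \<omega>}" "b = {\<omega>\<in>space P. y < pit t \<omega>}"
      by (auto simp: pit_greater_sets_def)
    then have "a \<inter> b = {\<omega>\<in>space P. max x y < pit t \<omega>}" by auto
    then show "a \<inter> b \<in> pit_greater_sets t" unfolding pit_greater_sets_def by blast
  qed
next
  case (Inr k)
  then show ?thesis by (cases k) (simp_all add: LM_Gt_Ct_sets_def Int_stable_gen_sets)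
qed

lemma indep_vars_pit_Gt: "indep_vars (\<lambda>_. borel) pit_Gt pit_Gt_index"
  unfolding indep_vars_def2
proof (intro conjI ballI)
  fix i assume "i \<in> pit_Gt_index"
  then consider t where "t \<in> {1..n}" "i = Inl t" | t j where "t \<in> {1..n}" "j \<in> {1..m+1}" "i = Inr (S2_G t j)"
    by (auto simp: pit_Gt_index_def)
  then show "random_variable borel (pit_Gt i)" by cases (simp_all add: pit_Gt_def Gt_borel)
next
  have "indep_sets (\<lambda>i. sigma_sets (space P) (case_sum pit_greater_sets LM_Gt_Ct_sets i)) pit_Gt_index"
    by (rule indep_sets_mono_index[OF _ indep_sets_sigma[OF indep_sets_pit_LM_Gt_Ct Int_stable_pit_LM_Gt_Ct]])
       (auto simp: pit_Gt_index_def LM_Gt_Ct_index_def Plus_def)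
  then show "indep_sets (\<lambda>i. {pit_Gt i -` A \<inter> space P | A. A \<in> sets borel}) pit_Gt_index"
  proof (rule indep_sets_mono_sets)
    fix i assume "i \<in> pit_Gt_index"
    then consider t where "t \<in> {1..n}" "i = Inl t" | t j where "i = Inr (S2_G t j)"
      by (auto simp: pit_Gt_index_def)
    then show "{pit_Gt i -` A \<inter> space P | A. A \<in> sets borel}
        \<subseteq> sigma_sets (space P) (case_sum pit_greater_sets LM_Gt_Ct_sets i)"
      by cases (auto simp: pit_Gt_def LM_Gt_Ct_sets_def gen_sets_def intro: pit_preimage_in_sigma sigma_sets.Basic)
  qed
qed

lemma indep_var_Gt_pit:
  assumes t: "t \<in> {1..n}" and j: "j \<in> {1..m+1}"
  shows "indep_var borel (Gt t j) borel (pit t)"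
proof -
  have "Inr (S2_G t j) \<in> pit_Gt_index" "Inl t \<in> pit_Gt_index" "Inr (S2_G t j) \<noteq> Inl t"
    using t j by (auto simp: pit_Gt_index_def)
  from indep_var_of_indep_vars[OF indep_vars_pit_Gt this] show ?thesis by (simp add: pit_Gt_def)
qed

lemma prob_pit_greater_one_minus_Gt:
  assumes t: "t \<in> {1..n}" and j: "j \<in> {1..m+1}"
  shows "prob {\<omega>\<in>space P. 1 - Gt t j \<omega> < pit t \<omega>} = (\<integral>\<omega>. 1 - uniform_cdf (1 - Gt t j \<omega>) \<partial>P)"
proof -
  have "{(x, u). 1 - x < u} = {p\<in>space (borel \<Otimes>\<^sub>M borel). 1 - fst p < (snd p :: real)}"
    by (auto simp: space_pair_measure)
  also have "\<dots> \<in> sets (borel \<Otimes>\<^sub>M borel)" by measurable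
  finally show ?thesis
    using prob_indep_pair_eq_integral[OF indep_var_Gt_pit[OF t j], of "{(x, u). 1 - x < u}" "\<lambda>x. 1 - uniform_cdf (1 - x)"]
    by (simp add: prob_pit_greater[OF t])
qed

lemma AE_pit_neq_one_minus_Gt:
  assumes t: "t \<in> {1..n}" and j: "j \<in> {1..m+1}"
  shows "AE \<omega> in P. pit t \<omega> \<noteq> 1 - Gt t j \<omega>"
proof (rule AE_of_prob_eq_0)
  have [measurable]: "Gt t j \<in> borel_measurable P" "pit t \<in> borel_measurable P"
    using Gt_borel[OF t j] measurable_pit[OF t] by auto
  show "{\<omega>\<in>space P. \<not> pit t \<omega> \<noteq> 1 - Gt t j \<omega>} \<in> events" by measurable
  have "{(x, u). u = 1 - x} = {p\<in>space (borel \<Otimes>\<^sub>M borel). (snd p :: real) = 1 - fst p}"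
    by (auto simp: space_pair_measure)
  also have "\<dots> \<in> sets (borel \<Otimes>\<^sub>M borel)" by measurable
  finally show "prob {\<omega>\<in>space P. \<not> pit t \<omega> \<noteq> 1 - Gt t j \<omega>} = 0"
    using prob_indep_pair_eq_integral[OF indep_var_Gt_pit[OF t j], of "{(x, u). u = 1 - x}" "\<lambda>_. 0"]
    by (simp add: prob_pit_eq[OF t])
qed

lemma viol_AE_eq:
  assumes t: "t \<in> {1..n}" and j: "j \<in> {1..m+1}"
  shows "AE \<omega> in P. viol L F Gt Ct t j \<omega> = (if 1 - Gt t j \<omega> < pit t \<omega> then 1 else 0)"
  using AE_Gt_in_unit[OF t j] AE_pit_neq_one_minus_Gt[OF t j]
proof eventually_elim
  case (elim \<omega>)
  let ?v = "1 - Gt t j \<omega>" and ?F = "F t (hist L t \<omega>)"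
  have v: "0 < ?v" "?v < 1" using elim by auto
  note F = F_distribution_function[OF t hist_in_space] F_cont[OF t hist_in_space]
  have "uquant ?F ?v < L t \<omega> \<longleftrightarrow> ?v < pit t \<omega>"
    using uquant_less_iff[OF F v] by (simp add: pit_def)
  moreover have "lquant ?F ?v < L t \<omega> \<longleftrightarrow> ?v < pit t \<omega>"
    using lquant_less_iff[OF F v] elim by (simp add: pit_def)
  ultimately show ?case by (cases "Ct t j \<omega>") (simp_all add: viol_def)
qed

lemma measurable_viol:
  assumes t: "t \<in> {1..n}" and j: "j \<in> {1..m+1}"
  shows "viol L F Gt Ct t j \<in> borel_measurable P"
proof -
  have [measurable]: "Gt t j \<in> borel_measurable P" "L t \<in> borel_measurable P"
    "Ct t j \<in> measurable P (count_space UNIV)"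
    using Gt_borel[OF t j] L_borel[OF t] Ct_measurable[OF t j] by auto
  have [measurable]: "(\<lambda>\<omega>. F t (hist L t \<omega>) x) \<in> borel_measurable P" for x
    using measurable_compose[OF measurable_hist_L[OF t] F_borel[OF t]] by simp
  have mono: "mono (F t (hist L t \<omega>))" for \<omega>
    using F_distribution_function[OF t hist_in_space, of L \<omega>] by (simp add: distribution_function_def)
  have [measurable]:
    "{\<omega>\<in>space P. uquant (F t (hist L t \<omega>)) (1 - Gt t j \<omega>) < L t \<omega>} \<in> sets P"
    "{\<omega>\<in>space P. lquant (F t (hist L t \<omega>)) (1 - Gt t j \<omega>) < L t \<omega>} \<in> sets P"
    using mono by (intro sets_uquant_less sets_lquant_less; measurable)+
  have "viol L F Gt Ct t j = (\<lambda>\<omega>. if Ct t j \<omega> = CompR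
      then (if uquant (F t (hist L t \<omega>)) (1 - Gt t j \<omega>) < L t \<omega> then 1 else 0)
      else (if lquant (F t (hist L t \<omega>)) (1 - Gt t j \<omega>) < L t \<omega> then 1 else 0))"
    by (auto simp: viol_def fun_eq_iff split: comp.split)
  also have "\<dots> \<in> borel_measurable P" by measurable
  finally show ?thesis .
qed

lemma expectation_viol:
  assumes t: "t \<in> {1..n}" and j: "j \<in> {1..m+1}"
  shows "expectation (viol L F Gt Ct t j) =
    (\<integral>\<omega>. G \<omega> * indicator (cell j) (G \<omega>) \<partial>P) / (g (\<alpha> j) - g (\<alpha> (j - 1)))"
proof -
  have [measurable]: "Gt t j \<in> borel_measurable P" "pit t \<in> borel_measurable P"
    "viol L F Gt Ct t j \<in> borel_measurable P"
    using Gt_borel[OF t j] measurable_pit[OF t] measurable_viol[OF t j] by auto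
  have "expectation (viol L F Gt Ct t j) = expectation (indicator {\<omega>\<in>space P. 1 - Gt t j \<omega> < pit t \<omega>})"
    using viol_AE_eq[OF t j] by (intro integral_cong_AE) (auto simp: indicator_def elim!: eventually_mono)
  also have "\<dots> = (\<integral>\<omega>. 1 - uniform_cdf (1 - Gt t j \<omega>) \<partial>P)"
    by (simp add: prob_pit_greater_one_minus_Gt[OF t j])
  also have "\<dots> = (\<integral>\<omega>. Gt t j \<omega> \<partial>P)"
  proof -
    have "AE \<omega> in P. 1 - uniform_cdf (1 - Gt t j \<omega>) = Gt t j \<omega>"
      using AE_Gt_in_unit[OF t j] by eventually_elim (simp add: uniform_cdf_def)
    then show ?thesis by (intro integral_cong_AE) simp_all
  qed
  finally show ?thesis by (simp add: integral_Gt[OF t j])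
qed

lemma indep_vars_viol:
  "indep_vars (\<lambda>_. PiM {1..m+1} (\<lambda>_. borel)) (\<lambda>t \<omega>. restrict (\<lambda>j. viol L F Gt Ct t j \<omega>) {1..m+1}) {1..n}"
proof -
  define block where "block t = insert (Inl t) (Inr ` {S2_G t j | j. j \<in> {1..m+1}})" for t
  define test where "test t w = restrict (\<lambda>j. if 1 - w (Inr (S2_G t j)) < w (Inl t) then 1 else 0 :: real) {1..m+1}"
    for t and w :: "nat + src2 \<Rightarrow> real"
  have "indep_vars (\<lambda>t. PiM (block t) (\<lambda>_. borel)) (\<lambda>t \<omega>. restrict (\<lambda>i. pit_Gt i \<omega>) (block t)) {1..n}"
    by (rule indep_vars_restrict[OF indep_vars_pit_Gt])
       (auto simp: block_def pit_Gt_index_def disjoint_family_on_def)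
  then have "indep_vars (\<lambda>_. PiM {1..m+1} (\<lambda>_. borel)) (\<lambda>t \<omega>. test t (restrict (\<lambda>i. pit_Gt i \<omega>) (block t))) {1..n}"
  proof (rule indep_vars_compose2)
    fix t
    have [measurable]: "(\<lambda>w. w i) \<in> borel_measurable (PiM (block t) (\<lambda>_. borel))" if "i \<in> block t" for i
      using that by (rule measurable_component_singleton)
    show "test t \<in> measurable (PiM (block t) (\<lambda>_. borel)) (PiM {1..m+1} (\<lambda>_. borel))"
      unfolding test_def by (rule measurable_restrict) (auto simp: block_def)
  qed
  moreover have "test t (restrict (\<lambda>i. pit_Gt i \<omega>) (block t))
      = restrict (\<lambda>j. if 1 - Gt t j \<omega> < pit t \<omega> then 1 else 0) {1..m+1}" for t \<omega>
    by (auto simp: test_def block_def pit_Gt_def fun_eq_iff)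
  ultimately have indep: "indep_vars (\<lambda>_. PiM {1..m+1} (\<lambda>_. borel))
      (\<lambda>t \<omega>. restrict (\<lambda>j. if 1 - Gt t j \<omega> < pit t \<omega> then 1 else 0 :: real) {1..m+1}) {1..n}"
    by simp
  show ?thesis
  proof (rule indep_vars_AE_eq[OF indep])
    fix t assume t: "t \<in> {1..n}"
    show "random_variable (PiM {1..m+1} (\<lambda>_. borel)) (\<lambda>\<omega>. restrict (\<lambda>j. viol L F Gt Ct t j \<omega>) {1..m+1})"
      by (rule measurable_restrict) (rule measurable_viol[OF t])
    have "AE \<omega> in P. \<forall>j\<in>{1..m+1}. viol L F Gt Ct t j \<omega> = (if 1 - Gt t j \<omega> < pit t \<omega> then 1 else 0)"
      using viol_AE_eq[OF t] by (simp add: AE_finite_all)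
    then show "AE \<omega> in P. restrict (\<lambda>j. if 1 - Gt t j \<omega> < pit t \<omega> then 1 else 0) {1..m+1}
        = restrict (\<lambda>j. viol L F Gt Ct t j \<omega>) {1..m+1}"
      by eventually_elim (auto simp: fun_eq_iff)
  qed
qed

end

theorem lemma3p4:
  fixes P :: "'a measure"
    and n m :: nat
    and L M :: "nat \<Rightarrow> 'a \<Rightarrow> real"
    and F :: "nat \<Rightarrow> (nat \<Rightarrow> real) \<Rightarrow> real \<Rightarrow> real"
    and g gr gl gc :: "real \<Rightarrow> real"
    and cr cl cc :: real
    and Gr Gl Gc :: "'a \<Rightarrow> real"
    and C :: "'a \<Rightarrow> comp"
    and \<alpha> :: "nat \<Rightarrow> real"
    and Gt :: "nat \<Rightarrow> nat \<Rightarrow> 'a \<Rightarrow> real"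
    and Ct :: "nat \<Rightarrow> nat \<Rightarrow> 'a \<Rightarrow> comp"
  assumes P: "prob_space P"
    and n: "n \<ge> 1"
    and LM_meas: "\<And>t. t \<in> {1..n} \<Longrightarrow> L t \<in> borel_measurable P \<and> M t \<in> borel_measurable P"
    and F_cond: "cond_cdf P M n F"
    and F_cont: "\<And>t h. t \<in> {1..n} \<Longrightarrow> h \<in> space (hist_space t) \<Longrightarrow> continuous_on UNIV (F t h)"
    and decomp: "distortion_decomp g cr cl cc gr gl gc"
    and Gr_meas: "Gr \<in> borel_measurable P"
    and Gl_meas: "Gl \<in> borel_measurable P"
    and Gc_meas: "Gc \<in> borel_measurable P"
    and C_meas: "C \<in> measurable P (count_space UNIV)"
    and Gr_law: "\<And>u. u \<in> {0..1} \<Longrightarrow> measure P {\<omega>\<in>space P. Gr \<omega> \<le> u} = gr u"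
    and Gl_law: "\<And>u. u \<in> {0..1} \<Longrightarrow> measure P {\<omega>\<in>space P. Gl \<omega> < u} = gl u"
    and Gc_law: "\<And>u. u \<in> {0..1} \<Longrightarrow> measure P {\<omega>\<in>space P. Gc \<omega> \<le> u} = gc u"
    and C_law: "measure P {\<omega>\<in>space P. C \<omega> = CompR} = cr"
               "measure P {\<omega>\<in>space P. C \<omega> = CompL} = cl"
               "measure P {\<omega>\<in>space P. C \<omega> = CompC} = cc"
    and indep1: "prob_space.indep_sets P
        (\<lambda>i. case i of
              S1_LM \<Rightarrow> gen_sets P (pathLM n L M) (pathLM_space n)
            | S1_Gr \<Rightarrow> gen_sets P Gr borel
            | S1_Gl \<Rightarrow> gen_sets P Gl borel
            | S1_Gc \<Rightarrow> gen_sets P Gc borel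
            | S1_C \<Rightarrow> gen_sets P C (count_space UNIV)) UNIV"
    and alpha0: "\<alpha> 0 = 0"
    and alpha1: "\<alpha> (m + 1) = 1"
    and alpha_mono: "\<And>j. j \<le> m \<Longrightarrow> \<alpha> j < \<alpha> (Suc j)"
    and g_cont: "\<And>j. j \<le> m + 1 \<Longrightarrow> continuous (at (\<alpha> j) within {0..1}) g"
    and g_incr: "\<And>j. j \<in> {1..m+1} \<Longrightarrow> g (\<alpha> j) - g (\<alpha> (j - 1)) \<noteq> 0"
    and Gt_meas: "\<And>t j. t \<in> {1..n} \<Longrightarrow> j \<in> {1..m+1} \<Longrightarrow> Gt t j \<in> borel_measurable P"
    and Gt_law: "\<And>t j A. t \<in> {1..n} \<Longrightarrow> j \<in> {1..m+1} \<Longrightarrow> A \<in> sets borel \<Longrightarrow>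
        measure P (Gt t j -` A \<inter> space P) =
          measure P {\<omega>\<in>space P. mixG Gr Gl Gc C \<omega> \<in> A \<inter> {\<alpha> (j - 1)..<\<alpha> j}}
          / measure P {\<omega>\<in>space P. mixG Gr Gl Gc C \<omega> \<in> {\<alpha> (j - 1)..<\<alpha> j}}"
    and Ct_meas: "\<And>t j. t \<in> {1..n} \<Longrightarrow> j \<in> {1..m+1} \<Longrightarrow> Ct t j \<in> measurable P (count_space UNIV)"
    and Ct_law: "\<And>t j. t \<in> {1..n} \<Longrightarrow> j \<in> {1..m+1} \<Longrightarrow>
        distr P (count_space UNIV) (Ct t j) = distr P (count_space UNIV) C"
    and indep2: "prob_space.indep_sets P
        (\<lambda>i. case i of
              S2_LM \<Rightarrow> gen_sets P (pathLM n L M) (pathLM_space n)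
            | S2_G t j \<Rightarrow> gen_sets P (Gt t j) borel
            | S2_C t j \<Rightarrow> gen_sets P (Ct t j) (count_space UNIV))
        ({S2_LM} \<union> {S2_G t j | t j. t \<in> {1..n} \<and> j \<in> {1..m+1}}
                  \<union> {S2_C t j | t j. t \<in> {1..n} \<and> j \<in> {1..m+1}})"
    and same_law: "distr P (path_space n) (path n M) = distr P (path_space n) (path n L)"
  shows "(\<forall>t\<in>{1..n}. \<forall>j\<in>{1..m+1}.
            prob_space.expectation P (viol L F Gt Ct t j) =
              (\<integral>\<omega>. mixG Gr Gl Gc C \<omega> * indicator {\<alpha> (j - 1)..<\<alpha> j} (mixG Gr Gl Gc C \<omega>) \<partial>P)
              / (g (\<alpha> j) - g (\<alpha> (j - 1))))
       \<and> prob_space.indep_vars P (\<lambda>_. PiM {1..m+1} (\<lambda>_. borel))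
            (\<lambda>t \<omega>. restrict (\<lambda>j. viol L F Gt Ct t j \<omega>) {1..m+1}) {1..n}"
proof -
  interpret prob_space P by (rule P)
  have C_indep:
    "prob {\<omega>\<in>space P. C \<omega> = CompR \<and> Gr \<omega> \<in> A} = cr * prob {\<omega>\<in>space P. Gr \<omega> \<in> A}"
    "prob {\<omega>\<in>space P. C \<omega> = CompL \<and> Gl \<omega> \<in> A} = cl * prob {\<omega>\<in>space P. Gl \<omega> \<in> A}"
    "prob {\<omega>\<in>space P. C \<omega> = CompC \<and> Gc \<omega> \<in> A} = cc * prob {\<omega>\<in>space P. Gc \<omega> \<in> A}"
    if "A \<in> sets borel" for A
    using prob_indep_gen_sets_pair[OF indep1, of S1_C S1_Gr C Gr A CompR]
      prob_indep_gen_sets_pair[OF indep1, of S1_C S1_Gl C Gl A CompL]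
      prob_indep_gen_sets_pair[OF indep1, of S1_C S1_Gc C Gc A CompC] that C_law
    by simp_all
  interpret violation_indicators P n M F L g gr gl gc cr cl cc Gr Gl Gc C m \<alpha> Gt Ct
    by unfold_locales (fact assms C_indep | use LM_meas in blast)+
  show ?thesis using expectation_viol indep_vars_viol by blast
qed

end
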